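(* Let $\mathcal{H}_A,\mathcal{H}_B$ be finite-dimensional Hilbert spaces, let $|\Psi\rangle,|\Phi\rangle\in\mathcal{H}_A\otimes\mathcal{H}_B$ be unit vectors (not necessarily orthogonal), and let $\alpha,\beta\in\mathbb{C}$ with $|\alpha|^2+|\beta|^2=1$ such that $|\Gamma\rangle=\alpha|\Psi\rangle+\beta|\Phi\rangle\neq 0$. Define $\rho^{AB}=|\alpha|^2|\Psi\rangle\langle\Psi|+|\beta|^2|\Phi\rangle\langle\Phi|$, $\rho^A=\mathrm{Tr}_B\rho^{AB}$, $\rho^B=\mathrm{Tr}_A\rho^{AB}$. Then $$\big\|\,|\Gamma\rangle\big\|^2\,E(\Gamma)\le 2\Big[|\alpha|^2E(\Psi)+|\beta|^2E(\Phi)+h_2(|\alpha|^2)-|S(\rho^A)-S(\rho^B)|\Big].$$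
   Context: $S(\rho)=-\mathrm{Tr}(\rho\log\rho)$ is the von Neumann entropy (logarithm base 2). For a nonzero vector $|\chi\rangle\in\mathcal{H}_A\otimes\mathcal{H}_B$, its entanglement is $E(\chi)=S\big(\mathrm{Tr}_B|\chi\rangle\langle\chi|/\langle\chi|\chi\rangle\big)$, i.e. the entropy of entanglement of the normalized vector. $h_2(x)=-x\log x-(1-x)\log(1-x)$ is the binary entropy function, with $0\log 0=0$. *)

theory Defs
  imports Complex_Main "Jordan_Normal_Form.Char_Poly"
begin

text \<open>A vector of H_A (x) H_B (dimensions dA, dB) is a complex vector of dimension dA*dB;
  the basis vector |i>|j> has index i*dB + j.\<close>

definition outer :: "complex vec \<Rightarrow> complex mat" where
  "outer v = mat (dim_vec v) (dim_vec v) (\<lambda>(i,k). v $ i * cnj (v $ k))"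

definition ptrace_B :: "nat \<Rightarrow> nat \<Rightarrow> complex mat \<Rightarrow> complex mat" where
  "ptrace_B dA dB \<rho> = mat dA dA (\<lambda>(i,i'). \<Sum>j<dB. \<rho> $$ (i*dB + j, i'*dB + j))"

definition ptrace_A :: "nat \<Rightarrow> nat \<Rightarrow> complex mat \<Rightarrow> complex mat" where
  "ptrace_A dA dB \<rho> = mat dB dB (\<lambda>(j,j'). \<Sum>i<dA. \<rho> $$ (i*dB + j, i*dB + j'))"

definition sqnorm :: "complex vec \<Rightarrow> real" where
  "sqnorm v = (\<Sum>i<dim_vec v. (cmod (v $ i))^2)"

definition xlog2x :: "real \<Rightarrow> real" where
  "xlog2x x = (if x \<le> 0 then 0 else x * log 2 x)"

text \<open>von Neumann entropy (base 2): -Tr(rho log rho) = - sum over eigenvalues (with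
  algebraic multiplicity, as roots of the characteristic polynomial) of lambda log lambda.\<close>
definition vN_entropy :: "complex mat \<Rightarrow> real" where
  "vN_entropy \<rho> = - (\<Sum>z\<in>{z. poly (char_poly \<rho>) z = 0}.
       real (order z (char_poly \<rho>)) * xlog2x (Re z))"

definition ent :: "nat \<Rightarrow> nat \<Rightarrow> complex vec \<Rightarrow> real" where
  "ent dA dB v = vN_entropy (ptrace_B dA dB ((1 / complex_of_real (sqnorm v)) \<cdot>\<^sub>m outer v))"

definition h2 :: "real \<Rightarrow> real" where
  "h2 x = - xlog2x x - xlog2x (1 - x)"

end

theory Submission
  imports Defs "HOL-Computational_Algebra.Fundamental_Theorem_Algebra"
begin

(* With Gamma' = alpha Psi - beta Phi, polarization gives
   rho_AB = (|Gamma><Gamma| + |Gamma'><Gamma'|) / 2, so rho_A = Tr_B rho_AB contains the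
   reduced state of Gamma with weight |Gamma|^2/2.  A concavity estimate yields
   (|Gamma|^2/2) E(Gamma) <= S(rho_A), and likewise <= S(rho_B) since the two reduced states of a
   pure state have equal entropy (Schmidt).  Conversely, S(rho_A) and S(rho_B) are at most
   X = |alpha|^2 E(Psi) + |beta|^2 E(Phi) + h2(|alpha|^2) (entropy of a mixture).  Hence
   |Gamma|^2 E(Gamma) <= 2 min(S(rho_A), S(rho_B)) <= 2 (X - |S(rho_A) - S(rho_B)|). *)

section \<open>The function eta(x) = - x log x\<close>

definition eta :: "real \<Rightarrow> real" where
  "eta x = - xlog2x x"

lemma eta_0 [simp]: "eta 0 = 0"
  by (simp add: eta_def xlog2x_def)

lemma eta_pos: "0 < x \<Longrightarrow> eta x = - x * ln x / ln 2"
  by (simp add: eta_def xlog2x_def log_def)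

lemma h2_eta: "h2 p = eta p + eta (1 - p)"
  unfolding h2_def eta_def by simp

lemma eta_nonneg:
  assumes "0 \<le> x" "x \<le> 1"
  shows "0 \<le> eta x"
proof (cases "x = 0")
  case False
  with assms have "0 < x" "ln x \<le> 0" by auto
  then have "x * ln x \<le> 0" by (simp add: mult_nonneg_nonpos)
  with \<open>0 < x\<close> show ?thesis by (simp add: eta_pos divide_nonpos_pos)
qed simp

text \<open>eta is a derivation: this gives the entropy of a scaled probability vector.\<close>
lemma eta_mult:
  assumes "0 \<le> a" "0 \<le> b"
  shows "eta (a * b) = a * eta b + b * eta a"
proof (cases "a = 0 \<or> b = 0")
  case False
  with assms have "0 < a" "0 < b" by auto
  then show ?thesis by (simp add: eta_pos ln_mult field_simps)
qed auto

lemma x_ln_ratio_le: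
  fixes x y :: real
  assumes "0 < x" "0 < y"
  shows "x * ln y - x * ln x \<le> y - x"
proof -
  have "ln (y/x) \<le> y/x - 1"
    using assms by (intro ln_le_minus_one) auto
  then have "x * ln (y/x) \<le> x * (y/x - 1)"
    using assms by (intro mult_left_mono) auto
  moreover have "x * (y/x - 1) = y - x" "ln (y/x) = ln y - ln x"
    using assms by (simp_all add: field_simps ln_div)
  ultimately show ?thesis
    by (simp add: right_diff_distrib)
qed

lemma eta_le_tangent:
  assumes "0 \<le> x" "0 < y"
  shows "eta x \<le> eta y + (- ln y / ln 2 - 1 / ln 2) * (x - y)"
proof (cases "x = 0")
  case True
  with assms show ?thesis by (simp add: eta_pos field_simps)
next
  case False
  with assms have x: "0 < x" by auto
  have "x * ln y - x * ln x \<le> y - x"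
    by (rule x_ln_ratio_le[OF x assms(2)])
  then have "- x * ln x \<le> - y * ln y + (- ln y - 1) * (x - y)"
    by (simp add: algebra_simps)
  then have "- x * ln x / ln 2 \<le> (- y * ln y + (- ln y - 1) * (x - y)) / ln 2"
    by (intro divide_right_mono) auto
  with x assms show ?thesis
    by (simp add: eta_pos divide_simps)
qed

lemma eta_jensen:
  assumes "finite S" "\<And>j. j \<in> S \<Longrightarrow> 0 \<le> Q j" "\<And>j. j \<in> S \<Longrightarrow> 0 \<le> x j" "sum Q S \<le> 1"
  shows "(\<Sum>j\<in>S. Q j * eta (x j)) \<le> eta (\<Sum>j\<in>S. Q j * x j)"
proof -
  define y where "y = (\<Sum>j\<in>S. Q j * x j)"
  have "0 \<le> y"
    unfolding y_def using assms by (intro sum_nonneg) auto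
  show ?thesis
  proof (cases "y = 0")
    case True
    then have "\<forall>j\<in>S. Q j * x j = 0"
      using assms unfolding y_def by (subst (asm) sum_nonneg_eq_0_iff) auto
    then have "(\<Sum>j\<in>S. Q j * eta (x j)) = 0"
      by (intro sum.neutral) auto
    with True show ?thesis
      by (simp add: y_def)
  next
    case False
    with \<open>0 \<le> y\<close> have y: "0 < y" by auto
    define c where "c = - ln y / ln 2 - 1 / ln 2"
    have "(\<Sum>j\<in>S. Q j * eta (x j)) \<le> (\<Sum>j\<in>S. Q j * (eta y + c * (x j - y)))"
      using assms eta_le_tangent[OF _ y] unfolding c_def by (intro sum_mono mult_left_mono) auto
    also have "\<dots> = eta y * sum Q S + c * (\<Sum>j\<in>S. Q j * x j) - (c * y) * sum Q S"
      by (simp add: algebra_simps sum.distrib sum_subtractf sum_distrib_left)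
    also have "\<dots> = sum Q S * eta y + c * (y - sum Q S * y)"
      by (simp add: y_def[symmetric] algebra_simps)
    also have "\<dots> = eta y - (1 - sum Q S) * y / ln 2"
      using y by (simp add: c_def eta_pos field_simps)
    also have "\<dots> \<le> eta y"
      using assms y by (simp add: divide_nonneg_pos)
    finally show ?thesis
      unfolding y_def .
  qed
qed

lemma eta_substochastic:
  assumes "finite J" "finite K" "\<And>j. j \<in> J \<Longrightarrow> 0 \<le> lam j"
    and "\<And>k j. k \<in> K \<Longrightarrow> j \<in> J \<Longrightarrow> 0 \<le> Q k j"
    and "\<And>k. k \<in> K \<Longrightarrow> (\<Sum>j\<in>J. Q k j) \<le> 1"
    and "\<And>j. j \<in> J \<Longrightarrow> 0 < lam j \<Longrightarrow> (\<Sum>k\<in>K. Q k j) = 1"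
  shows "(\<Sum>j\<in>J. eta (lam j)) \<le> (\<Sum>k\<in>K. eta (\<Sum>j\<in>J. Q k j * lam j))"
proof -
  have "(\<Sum>j\<in>J. eta (lam j)) = (\<Sum>j\<in>J. (\<Sum>k\<in>K. Q k j) * eta (lam j))"
  proof (rule sum.cong)
    fix j assume "j \<in> J"
    with assms(3,6) show "eta (lam j) = (\<Sum>k\<in>K. Q k j) * eta (lam j)"
      by (cases "lam j = 0") force+
  qed simp
  also have "\<dots> = (\<Sum>k\<in>K. \<Sum>j\<in>J. Q k j * eta (lam j))"
    by (simp add: sum_distrib_right sum.swap[of _ J])
  also have "\<dots> \<le> (\<Sum>k\<in>K. eta (\<Sum>j\<in>J. Q k j * lam j))"
    using assms by (intro sum_mono eta_jensen) auto
  finally show ?thesis .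
qed

text \<open>Removing a part d' of total weight at most 1 - s from a weight d + d' and rescaling the rest
  by 1/s loses at most a factor s in eta.\<close>
lemma eta_rescale_le:
  assumes d: "0 \<le> d" and d': "0 \<le> d'" and s: "0 < s" "s \<le> 1" and dd: "d' \<le> 1 - s"
  shows "s * eta (d / s) \<le> eta (d + d')"
proof (cases "d = 0")
  case True
  with d' dd s show ?thesis by (simp add: eta_nonneg)
next
  case False
  with d have dp: "0 < d" by auto
  have key: "(d + d') * ln (d + d') \<le> d * ln (d / s)"
  proof (cases "d' = 0")
    case True
    with dp s show ?thesis by (simp add: ln_div)
  next
    case False
    with d' dd have dp': "0 < d'" and s': "0 < 1 - s" by auto
    define D where "D = d + d'"
    have D: "0 < D" using dp dp' by (simp add: D_def)
    have t1: "d * ln (s * D) - d * ln d \<le> s * D - d"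
      using x_ln_ratio_le[OF dp, of "s * D"] D s by auto
    have t2: "d' * ln ((1 - s) * D) - d' * ln d' \<le> (1 - s) * D - d'"
      using x_ln_ratio_le[OF dp', of "(1 - s) * D"] D s' by auto
    have "ln (d' / (1 - s)) \<le> 0"
      using dd s' dp' by simp
    then have neg: "d' * ln (d' / (1 - s)) \<le> 0"
      using dp' by (simp add: mult_nonneg_nonpos)
    have e: "ln (s * D) = ln s + ln D" "ln ((1 - s) * D) = ln (1 - s) + ln D"
      "ln (d / s) = ln d - ln s" "ln (d' / (1 - s)) = ln d' - ln (1 - s)"
      using s s' D dp dp' by (simp_all add: ln_mult ln_div)
    have "d * ln s + d * ln D - d * ln d \<le> s * D - d"
      using t1 unfolding e by (simp add: algebra_simps)
    moreover have "d' * ln (1 - s) + d' * ln D - d' * ln d' \<le> (1 - s) * D - d'"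
      using t2 unfolding e by (simp add: algebra_simps)
    moreover have "D * ln D = d * ln D + d' * ln D" "s * D + (1 - s) * D = d + d'"
      by (simp_all add: D_def algebra_simps)
    moreover have "d * ln (d / s) + d' * ln (d' / (1 - s)) = d * ln d - d * ln s + d' * ln d' - d' * ln (1 - s)"
      unfolding e by (simp add: algebra_simps)
    ultimately have "D * ln D \<le> d * ln (d / s) + d' * ln (d' / (1 - s))"
      by linarith
    with neg show ?thesis
      unfolding D_def by linarith
  qed
  have "s * eta (d / s) = - d * ln (d / s) / ln 2"
    using dp s by (simp add: eta_pos)
  also have "\<dots> \<le> - (d + d') * ln (d + d') / ln 2"
    using key by (intro divide_right_mono) (simp_all only: mult_minus_left neg_le_iff_le, simp)
  also have "\<dots> = eta (d + d')"
    using dp d' by (simp add: eta_pos)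
  finally show ?thesis .
qed


section \<open>Square matrices as functions and the spectral theorem\<close>

text \<open>An n-vector is a function nat => complex and an n x n matrix a function
  nat => nat => complex; only arguments below n matter.  An ensemble of K vectors
  is a function v with v k the k-th vector.\<close>

definition norm2 :: "nat \<Rightarrow> (nat \<Rightarrow> complex) \<Rightarrow> real" where
  "norm2 n v = (\<Sum>i<n. (cmod (v i))\<^sup>2)"

definition outer_sum :: "nat \<Rightarrow> (nat \<Rightarrow> nat \<Rightarrow> complex) \<Rightarrow> nat \<Rightarrow> nat \<Rightarrow> complex" where
  "outer_sum K v i i' = (\<Sum>k<K. v k i * cnj (v k i'))"

text \<open>Reading the ensemble the other way round: outer_sum n (conj_transp v) is the
  (transposed) Gram matrix of the vectors v k.\<close>
definition conj_transp :: "(nat \<Rightarrow> nat \<Rightarrow> complex) \<Rightarrow> nat \<Rightarrow> nat \<Rightarrow> complex" where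
  "conj_transp v i k = cnj (v k i)"

definition mat_eq :: "nat \<Rightarrow> (nat \<Rightarrow> nat \<Rightarrow> complex) \<Rightarrow> (nat \<Rightarrow> nat \<Rightarrow> complex) \<Rightarrow> bool" where
  "mat_eq n A B \<longleftrightarrow> (\<forall>i<n. \<forall>j<n. A i j = B i j)"

definition mmul :: "nat \<Rightarrow> (nat \<Rightarrow> nat \<Rightarrow> complex) \<Rightarrow> (nat \<Rightarrow> nat \<Rightarrow> complex) \<Rightarrow> nat \<Rightarrow> nat \<Rightarrow> complex" where
  "mmul n A B i j = (\<Sum>k<n. A i k * B k j)"

definition adjoint :: "(nat \<Rightarrow> nat \<Rightarrow> complex) \<Rightarrow> nat \<Rightarrow> nat \<Rightarrow> complex" where
  "adjoint A i j = cnj (A j i)"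

definition ident :: "nat \<Rightarrow> nat \<Rightarrow> complex" where
  "ident i j = (if i = j then 1 else 0)"

definition diagm :: "(nat \<Rightarrow> real) \<Rightarrow> nat \<Rightarrow> nat \<Rightarrow> complex" where
  "diagm lam i j = (if i = j then complex_of_real (lam i) else 0)"

definition orth_cols :: "nat \<Rightarrow> (nat \<Rightarrow> nat \<Rightarrow> complex) \<Rightarrow> bool" where
  "orth_cols n U \<longleftrightarrow> (\<forall>j<n. \<forall>l<n. (\<Sum>i<n. cnj (U i j) * U i l) = (if j = l then 1 else 0))"

definition orth_rows :: "nat \<Rightarrow> (nat \<Rightarrow> nat \<Rightarrow> complex) \<Rightarrow> bool" where
  "orth_rows n U \<longleftrightarrow> (\<forall>i<n. \<forall>i'<n. (\<Sum>j<n. U i j * cnj (U i' j)) = (if i = i' then 1 else 0))"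

definition eigendecomp :: "nat \<Rightarrow> (nat \<Rightarrow> nat \<Rightarrow> complex) \<Rightarrow> (nat \<Rightarrow> nat \<Rightarrow> complex) \<Rightarrow> (nat \<Rightarrow> real) \<Rightarrow> bool" where
  "eigendecomp n R U lam \<longleftrightarrow> orth_cols n U \<and> orth_rows n U \<and>
     (\<forall>i<n. \<forall>i'<n. R i i' = (\<Sum>j<n. U i j * complex_of_real (lam j) * cnj (U i' j)))"

lemma of_real_norm2: "complex_of_real (norm2 n v) = (\<Sum>i<n. v i * cnj (v i))"
  unfolding norm2_def of_real_sum complex_norm_square ..

lemma norm2_nonneg: "0 \<le> norm2 n v"
  unfolding norm2_def by (intro sum_nonneg) auto

lemma sum_delta_left:
  fixes f :: "nat \<Rightarrow> complex"
  assumes "i < n"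
  shows "(\<Sum>k<n. (if i = k then 1 else 0) * f k) = f i"
proof -
  have "(\<Sum>k<n. (if i = k then 1 else 0) * f k) = (\<Sum>k<n. if k = i then f k else 0)"
    by (rule sum.cong) auto
  with assms show ?thesis by simp
qed

lemma sum_delta_right:
  fixes f :: "nat \<Rightarrow> complex"
  assumes "j < n"
  shows "(\<Sum>k<n. f k * (if k = j then 1 else 0)) = f j"
proof -
  have "(\<Sum>k<n. f k * (if k = j then 1 else 0)) = (\<Sum>k<n. if k = j then f k else 0)"
    by (rule sum.cong) auto
  with assms show ?thesis by simp
qed

lemma outer_sum_herm: "outer_sum K v i i' = cnj (outer_sum K v i' i)"
  by (simp add: outer_sum_def mult.commute)

lemma conj_transp_conj_transp [simp]: "conj_transp (conj_transp v) = v"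
  unfolding conj_transp_def by (intro ext) simp

lemma sum_swap3: "(\<Sum>i\<in>A. \<Sum>j\<in>B. \<Sum>k\<in>C. f i j k) = (\<Sum>k\<in>C. \<Sum>i\<in>A. \<Sum>j\<in>B. f i j k)"
proof -
  have "(\<Sum>i\<in>A. \<Sum>j\<in>B. \<Sum>k\<in>C. f i j k) = (\<Sum>i\<in>A. \<Sum>k\<in>C. \<Sum>j\<in>B. f i j k)"
    by (rule sum.cong[OF refl], rule sum.swap)
  also have "\<dots> = (\<Sum>k\<in>C. \<Sum>i\<in>A. \<Sum>j\<in>B. f i j k)"
    by (rule sum.swap)
  finally show ?thesis .
qed

lemma sum_mult_sum:
  fixes f g :: "'b \<Rightarrow> complex"
  shows "(\<Sum>i\<in>A. f i) * c * (\<Sum>i'\<in>B. g i') = (\<Sum>i\<in>A. \<Sum>i'\<in>B. f i * c * g i')"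
  by (simp add: sum_distrib_left sum_distrib_right mult.assoc sum.swap[of _ B])

lemma mat_eq_refl [simp]: "mat_eq n A A"
  by (simp add: mat_eq_def)

lemma mat_eq_sym: "mat_eq n A B \<Longrightarrow> mat_eq n B A"
  by (simp add: mat_eq_def)

lemma mat_eq_trans [trans]: "mat_eq n A B \<Longrightarrow> mat_eq n B C \<Longrightarrow> mat_eq n A C"
  by (simp add: mat_eq_def)

lemma mat_eq_eq_trans [trans]: "A = B \<Longrightarrow> mat_eq n B C \<Longrightarrow> mat_eq n A C"
  by simp

lemma mmul_assoc: "mmul n (mmul n A B) C = mmul n A (mmul n B C)"
proof (intro ext)
  fix i j
  have "(\<Sum>k<n. (\<Sum>l<n. A i l * B l k) * C k j) = (\<Sum>k<n. \<Sum>l<n. A i l * B l k * C k j)"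
    by (simp add: sum_distrib_right)
  also have "\<dots> = (\<Sum>l<n. \<Sum>k<n. A i l * B l k * C k j)"
    by (rule sum.swap)
  also have "\<dots> = (\<Sum>l<n. A i l * (\<Sum>k<n. B l k * C k j))"
    by (simp add: sum_distrib_left mult.assoc)
  finally show "mmul n (mmul n A B) C i j = mmul n A (mmul n B C) i j"
    unfolding mmul_def .
qed

lemma mmul_cong: "mat_eq n A A' \<Longrightarrow> mat_eq n B B' \<Longrightarrow> mat_eq n (mmul n A B) (mmul n A' B')"
  unfolding mat_eq_def mmul_def by auto

lemma mmul_congL: "mat_eq n X Y \<Longrightarrow> mat_eq n (mmul n Z X) (mmul n Z Y)"
  by (rule mmul_cong) auto

lemma mmul_congR: "mat_eq n X Y \<Longrightarrow> mat_eq n (mmul n X Z) (mmul n Y Z)"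
  by (rule mmul_cong) auto

lemma mmul_ident_left: "mat_eq n (mmul n ident A) A"
  unfolding mat_eq_def mmul_def ident_def by (simp add: sum_delta_left)

lemma mmul_ident_right: "mat_eq n (mmul n A ident) A"
  unfolding mat_eq_def mmul_def ident_def by (simp add: sum_delta_right)

lemma adjoint_mmul: "adjoint (mmul n A B) = mmul n (adjoint B) (adjoint A)"
  unfolding adjoint_def mmul_def by (intro ext) (simp add: mult.commute)

lemma mmul_diagm: "j < n \<Longrightarrow> mmul n U (diagm lam) i j = U i j * complex_of_real (lam j)"
  unfolding mmul_def diagm_def
  using sum_delta_right[of j n "\<lambda>k. U i k * complex_of_real (lam k)"]
  by (simp add: if_distrib cong: if_cong)

lemma mmul_cancel: "mat_eq n (mmul n A B) ident \<Longrightarrow> mat_eq n (mmul n A (mmul n B X)) X"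
proof -
  assume AB: "mat_eq n (mmul n A B) ident"
  have "mmul n A (mmul n B X) = mmul n (mmul n A B) X"
    by (simp add: mmul_assoc)
  also have "mat_eq n \<dots> (mmul n ident X)"
    by (rule mmul_congR[OF AB])
  also have "mat_eq n \<dots> X"
    by (rule mmul_ident_left)
  finally show ?thesis .
qed

lemma orth_cols_mat_eq: "orth_cols n U \<longleftrightarrow> mat_eq n (mmul n (adjoint U) U) ident"
  unfolding orth_cols_def mat_eq_def mmul_def adjoint_def ident_def ..

lemma orth_rows_mat_eq: "orth_rows n U \<longleftrightarrow> mat_eq n (mmul n U (adjoint U)) ident"
  unfolding orth_rows_def mat_eq_def mmul_def adjoint_def ident_def ..

lemma eigendecomp_mat_eq:
  "eigendecomp n R U lam \<longleftrightarrow>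
     orth_cols n U \<and> orth_rows n U \<and> mat_eq n R (mmul n (mmul n U (diagm lam)) (adjoint U))"
proof -
  have "(\<forall>i<n. \<forall>i'<n. R i i' = (\<Sum>j<n. U i j * complex_of_real (lam j) * cnj (U i' j)))
     \<longleftrightarrow> mat_eq n R (mmul n (mmul n U (diagm lam)) (adjoint U))"
    unfolding mat_eq_def by (simp add: mmul_def[of n "mmul n U (diagm lam)"] mmul_diagm adjoint_def)
  then show ?thesis
    unfolding eigendecomp_def by simp
qed

lemma eigendecomp_quad:
  assumes "eigendecomp n R U lam" "j < n" "l < n"
  shows "(\<Sum>i<n. \<Sum>i'<n. cnj (U i j) * R i i' * U i' l) = (if j = l then complex_of_real (lam j) else 0)"
proof -
  have col: "\<And>j l. j < n \<Longrightarrow> l < n \<Longrightarrow> (\<Sum>i<n. cnj (U i j) * U i l) = (if j = l then 1 else 0)"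
    and R: "\<And>i i'. i < n \<Longrightarrow> i' < n \<Longrightarrow> R i i' = (\<Sum>p<n. U i p * complex_of_real (lam p) * cnj (U i' p))"
    using assms(1) unfolding eigendecomp_def orth_cols_def by auto
  have "(\<Sum>i<n. \<Sum>i'<n. cnj (U i j) * R i i' * U i' l)
     = (\<Sum>i<n. \<Sum>i'<n. \<Sum>p<n. (cnj (U i j) * U i p) * complex_of_real (lam p) * (cnj (U i' p) * U i' l))"
    by (intro sum.cong refl) (simp add: R sum_distrib_left sum_distrib_right mult_ac)
  also have "\<dots> = (\<Sum>p<n. \<Sum>i<n. \<Sum>i'<n. (cnj (U i j) * U i p) * complex_of_real (lam p) * (cnj (U i' p) * U i' l))"
    by (rule sum_swap3)
  also have "\<dots> = (\<Sum>p<n. (\<Sum>i<n. cnj (U i j) * U i p) * complex_of_real (lam p) * (\<Sum>i'<n. cnj (U i' p) * U i' l))"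
    by (simp only: sum_mult_sum)
  also have "\<dots> = (\<Sum>p<n. (if j = p then complex_of_real (lam p) else 0) * (if p = l then 1 else 0))"
    using col assms(2,3) by (intro sum.cong refl) auto
  also have "\<dots> = (if j = l then complex_of_real (lam j) else 0)"
    using assms(3) by (subst sum_delta_right) auto
  finally show ?thesis .
qed


subsection \<open>The spectral theorem for Hermitian matrices\<close>

text \<open>Every square matrix of positive dimension has a unit eigenvector (fundamental theorem
  of algebra applied to the characteristic polynomial).\<close>
lemma unit_eigenvector_exists:
  fixes R :: "nat \<Rightarrow> nat \<Rightarrow> complex"
  assumes "0 < n"
  shows "\<exists>e w. (\<Sum>i<n. w i * cnj (w i)) = 1 \<and> (\<forall>i<n. (\<Sum>j<n. R i j * w j) = e * w i)"
proof -
  define A :: "complex mat" where "A = mat n n (\<lambda>(i,j). R i j)"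
  have A: "A \<in> carrier_mat n n"
    by (simp add: A_def)
  have "degree (char_poly A) = n"
    using degree_monic_char_poly[OF A] by simp
  with assms have "\<not> constant (poly (char_poly A))"
    by (simp add: constant_degree)
  then obtain e where "poly (char_poly A) e = 0"
    using fundamental_theorem_of_algebra by blast
  then have "eigenvalue A e"
    using eigenvalue_root_char_poly[OF A] by simp
  then obtain v where "eigenvector A v e"
    unfolding eigenvalue_def by blast
  then have v: "v \<in> carrier_vec n" "v \<noteq> 0\<^sub>v n" "A *\<^sub>v v = e \<cdot>\<^sub>v v"
    unfolding eigenvector_def using A by auto
  have ev: "(\<Sum>j<n. R i j * v $ j) = e * v $ i" if "i < n" for i
  proof -
    have "(A *\<^sub>v v) $ i = (e \<cdot>\<^sub>v v) $ i"
      using v(3) by simp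
    with that v(1) show ?thesis
      by (simp add: A_def scalar_prod_def atLeast0LessThan)
  qed
  obtain i0 where i0: "i0 < n" "v $ i0 \<noteq> 0"
    using v(1,2) by (metis carrier_vecD eq_vecI index_zero_vec)
  define N where "N = norm2 n (\<lambda>i. v $ i)"
  have "(cmod (v $ i0))\<^sup>2 \<le> N"
    unfolding N_def norm2_def using i0 by (intro member_le_sum) auto
  moreover have "0 < (cmod (v $ i0))\<^sup>2"
    using i0 by simp
  ultimately have N: "0 < N" by linarith
  define s where "s = complex_of_real (sqrt N)"
  have ss: "s * cnj s = complex_of_real N"
    unfolding s_def using N by (simp flip: of_real_mult)
  define w where "w i = v $ i / s" for i
  have "(\<Sum>i<n. w i * cnj (w i)) = (\<Sum>i<n. v $ i * cnj (v $ i)) / (s * cnj s)"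
    unfolding w_def by (simp add: sum_divide_distrib)
  also have "\<dots> = complex_of_real N / complex_of_real N"
    unfolding ss N_def of_real_norm2 ..
  also have "\<dots> = 1"
    using N by simp
  finally have "(\<Sum>i<n. w i * cnj (w i)) = 1" .
  moreover have "\<forall>i<n. (\<Sum>j<n. R i j * w j) = e * w i"
    using ev unfolding w_def by (simp add: sum_divide_distrib[symmetric] mult.assoc)
  ultimately show ?thesis
    by blast
qed

text \<open>The Householder reflection 1 - 2 |u><u| / <u|u> is Hermitian and squares to 1
  (for u = 0 it is the identity).\<close>
definition householder :: "nat \<Rightarrow> (nat \<Rightarrow> complex) \<Rightarrow> nat \<Rightarrow> nat \<Rightarrow> complex" where
  "householder n u i j = ident i j - 2 / (\<Sum>k<n. u k * cnj (u k)) * u i * cnj (u j)"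

lemma householder_adjoint: "mat_eq n (adjoint (householder n u)) (householder n u)"
proof -
  define Nu where "Nu = (\<Sum>k<n. u k * cnj (u k))"
  have "cnj Nu = Nu"
    unfolding Nu_def by (simp add: mult.commute)
  then show ?thesis
    unfolding mat_eq_def adjoint_def householder_def ident_def Nu_def[symmetric] by (auto simp: mult_ac)
qed

lemma householder_square: "mat_eq n (mmul n (householder n u) (householder n u)) ident"
  unfolding mat_eq_def
proof (intro allI impI)
  fix i j assume ij: "i < n" "j < n"
  define Nu where "Nu = (\<Sum>k<n. u k * cnj (u k))"
  define t where "t = 2 / Nu"
  have tt: "t * t * Nu = 2 * t"
    unfolding t_def by (cases "Nu = 0") (auto simp: field_simps)
  have "mmul n (householder n u) (householder n u) i j
      = (\<Sum>k<n. (if i = k then 1 else 0) * (if k = j then 1 else 0)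
          - (if i = k then 1 else 0) * (t * u k * cnj (u j)) - (t * u i * cnj (u k)) * (if k = j then 1 else 0)
          + (t * t * u i * cnj (u j)) * (u k * cnj (u k)))"
    unfolding mmul_def householder_def ident_def t_def Nu_def[symmetric]
    by (intro sum.cong refl) (simp add: algebra_simps)
  also have "\<dots> = (if i = j then 1 else 0) - t * u i * cnj (u j) - t * u i * cnj (u j)
                     + t * t * u i * cnj (u j) * Nu"
    using ij by (simp add: sum.distrib sum_subtractf sum_delta_left sum_delta_right
        sum_distrib_left[symmetric] Nu_def)
  also have "t * t * u i * cnj (u j) * Nu = (t * t * Nu) * (u i * cnj (u j))"
    by (simp add: mult_ac)
  also have "\<dots> = 2 * t * u i * cnj (u j)"
    unfolding tt by (simp add: mult_ac)
  finally have "mmul n (householder n u) (householder n u) i j = (if i = j then 1 else 0)"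
    by simp
  then show "mmul n (householder n u) (householder n u) i j = ident i j"
    by (simp add: ident_def)
qed

lemma householder_first_column:
  fixes w :: "nat \<Rightarrow> complex"
  assumes n: "0 < n" and w1: "(\<Sum>i<n. w i * cnj (w i)) = 1"
  shows "\<exists>u c. c \<noteq> 0 \<and> (\<forall>i<n. householder n u i 0 = c * w i)"
proof -
  define r where "r = cmod (w 0)"
  define c0 where "c0 = (if w 0 = 0 then 1 else w 0 / complex_of_real r)"
  have "cmod c0 = 1"
    unfolding c0_def r_def by (simp add: norm_divide)
  then have c1: "cnj c0 * c0 = 1"
    using complex_norm_square[of c0] by (simp add: mult.commute)
  have c2: "w 0 = c0 * complex_of_real r"
    unfolding c0_def r_def by auto
  define u where "u i = w i - (if i = 0 then c0 else 0)" for i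
  define Nu where "Nu = (\<Sum>i<n. u i * cnj (u i))"
  have Nu_eq: "Nu = 2 - 2 * complex_of_real r"
  proof -
    have "Nu = (\<Sum>i<n. w i * cnj (w i) - (if i = 0 then c0 * cnj (w i) + w i * cnj c0 else 0)
                 + (if i = 0 then c0 * cnj c0 else 0))"
      unfolding Nu_def u_def by (intro sum.cong refl) (auto simp: algebra_simps)
    also have "\<dots> = 1 - (c0 * cnj (w 0) + w 0 * cnj c0) + c0 * cnj c0"
      using n w1 by (simp add: sum.distrib sum_subtractf sum.delta)
    also have "\<dots> = 2 - 2 * complex_of_real r"
      using c1 unfolding c2 by (simp add: algebra_simps)
    finally show ?thesis .
  qed
  have H: "householder n u i 0 = ident i 0 - 2 / Nu * u i * cnj (u 0)" for i
    unfolding householder_def Nu_def ..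
  have "householder n u i 0 = cnj c0 * w i" if "i < n" for i
  proof (cases "Nu = 0")
    case True
    then have "norm2 n u = 0"
      unfolding Nu_def of_real_norm2[symmetric] by simp
    then have "u i = 0"
      using that unfolding norm2_def by (subst (asm) sum_nonneg_eq_0_iff) auto
    then show ?thesis
      using True c1 unfolding H u_def ident_def by (auto simp: mult.commute)
  next
    case False
    have e: "cnj (u 0) = cnj c0 * complex_of_real r - cnj c0"
      unfolding u_def using c2 c1 by (simp add: algebra_simps)
    have d: "2 - 2 * complex_of_real r \<noteq> 0"
      using False Nu_eq by simp
    have "2 / Nu * cnj (u 0) = 2 * (cnj c0 * complex_of_real r - cnj c0) / (2 - 2 * complex_of_real r)"
      unfolding Nu_eq e by simp
    also have "\<dots> = - cnj c0"
      using d by (simp add: field_simps)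
    finally have tu: "2 / Nu * cnj (u 0) = - cnj c0" .
    have "householder n u i 0 = ident i 0 - u i * (2 / Nu * cnj (u 0))"
      unfolding H by (simp add: mult_ac)
    then have "householder n u i 0 = ident i 0 + cnj c0 * u i"
      unfolding tu by simp
    then show ?thesis
      unfolding u_def ident_def using c1 by (cases "i = 0") (auto simp: algebra_simps)
  qed
  moreover have "cnj c0 \<noteq> 0"
    using c1 by auto
  ultimately show ?thesis
    by blast
qed

lemma eigendecomp_conj:
  assumes hermH: "mat_eq n (adjoint H) H" and unitH: "mat_eq n (mmul n H H) ident"
    and dec: "eigendecomp n (mmul n (mmul n H R) H) U lam"
  shows "eigendecomp n R (mmul n H U) lam"
proof -
  let ?U = "mmul n H U"
  let ?A = "mmul n (mmul n H R) H"
  have col: "mat_eq n (mmul n (adjoint U) U) ident" and row: "mat_eq n (mmul n U (adjoint U)) ident"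
    and A: "mat_eq n ?A (mmul n (mmul n U (diagm lam)) (adjoint U))"
    using dec unfolding eigendecomp_mat_eq orth_cols_mat_eq orth_rows_mat_eq by auto
  have adjH: "mat_eq n (mmul n (adjoint H) H) ident"
    using mat_eq_trans[OF mmul_congR[OF hermH] unitH] .
  have adjH': "mat_eq n (mmul n H (adjoint H)) ident"
    using mat_eq_trans[OF mmul_congL[OF hermH] unitH] .
  have "mmul n (adjoint ?U) ?U = mmul n (adjoint U) (mmul n (adjoint H) (mmul n H U))"
    by (simp add: adjoint_mmul mmul_assoc)
  also have "mat_eq n \<dots> (mmul n (adjoint U) U)"
    by (rule mmul_congL, rule mmul_cancel[OF adjH])
  also have "mat_eq n \<dots> ident"
    by (rule col)
  finally have cols: "orth_cols n ?U"
    unfolding orth_cols_mat_eq .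
  have "mmul n ?U (adjoint ?U) = mmul n H (mmul n U (mmul n (adjoint U) (adjoint H)))"
    by (simp add: adjoint_mmul mmul_assoc)
  also have "mat_eq n \<dots> (mmul n H (adjoint H))"
    by (rule mmul_congL, rule mmul_cancel[OF row])
  also have "mat_eq n \<dots> ident"
    by (rule adjH')
  finally have rows: "orth_rows n ?U"
    unfolding orth_rows_mat_eq .
  have "mmul n (mmul n ?U (diagm lam)) (adjoint ?U)
      = mmul n H (mmul n (mmul n (mmul n U (diagm lam)) (adjoint U)) (adjoint H))"
    by (simp add: adjoint_mmul mmul_assoc)
  also have "mat_eq n \<dots> (mmul n H (mmul n ?A H))"
    by (rule mmul_congL, rule mmul_cong[OF mat_eq_sym[OF A] hermH])
  also have "mmul n H (mmul n ?A H) = mmul n (mmul n H H) (mmul n R (mmul n H H))"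
    by (simp add: mmul_assoc)
  also have "mat_eq n \<dots> (mmul n ident (mmul n R ident))"
    by (rule mmul_cong[OF unitH], rule mmul_congL[OF unitH])
  also have "mat_eq n \<dots> (mmul n R ident)"
    by (rule mmul_ident_left)
  also have "mat_eq n \<dots> R"
    by (rule mmul_ident_right)
  finally have "mat_eq n R (mmul n (mmul n ?U (diagm lam)) (adjoint ?U))"
    by (rule mat_eq_sym)
  with cols rows show ?thesis
    unfolding eigendecomp_mat_eq by blast
qed

lemma eigendecomp_block:
  fixes A A3 U3 :: "nat \<Rightarrow> nat \<Rightarrow> complex" and lam3 :: "nat \<Rightarrow> real"
  assumes dec3: "eigendecomp m A3 U3 lam3"
    and A00: "A 0 0 = complex_of_real r" and A0l: "\<forall>l<m. A 0 (Suc l) = 0"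
    and Ak0: "\<forall>k<m. A (Suc k) 0 = 0" and A3: "\<forall>a<m. \<forall>b<m. A (Suc a) (Suc b) = A3 a b"
  defines "U \<equiv> (\<lambda>k j. if k = 0 then (if j = 0 then 1 else 0) else if j = 0 then 0 else U3 (k-1) (j-1))"
    and "lam \<equiv> (\<lambda>j. if j = 0 then r else lam3 (j - 1))"
  shows "eigendecomp (Suc m) A U lam"
proof -
  have col3: "\<And>j l. j < m \<Longrightarrow> l < m \<Longrightarrow> (\<Sum>i<m. cnj (U3 i j) * U3 i l) = (if j = l then 1 else 0)"
    and row3: "\<And>i i'. i < m \<Longrightarrow> i' < m \<Longrightarrow> (\<Sum>j<m. U3 i j * cnj (U3 i' j)) = (if i = i' then 1 else 0)"
    and R3: "\<And>i i'. i < m \<Longrightarrow> i' < m \<Longrightarrow> A3 i i' = (\<Sum>j<m. U3 i j * complex_of_real (lam3 j) * cnj (U3 i' j))"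
    using dec3 unfolding eigendecomp_def orth_cols_def orth_rows_def by auto
  have U: "U 0 0 = 1" "\<And>j. U 0 (Suc j) = 0" "\<And>k. U (Suc k) 0 = 0" "\<And>k j. U (Suc k) (Suc j) = U3 k j"
    unfolding U_def by auto
  have L: "lam 0 = r" "\<And>j. lam (Suc j) = lam3 j"
    unfolding lam_def by auto
  have "orth_cols (Suc m) U"
    unfolding orth_cols_def
  proof (intro allI impI)
    fix j l assume "j < Suc m" "l < Suc m"
    then show "(\<Sum>i<Suc m. cnj (U i j) * U i l) = (if j = l then 1 else 0)"
      by (cases j; cases l) (simp_all only: sum.lessThan_Suc_shift U, simp_all add: col3)
  qed
  moreover have "orth_rows (Suc m) U"
    unfolding orth_rows_def
  proof (intro allI impI)
    fix j l assume "j < Suc m" "l < Suc m"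
    then show "(\<Sum>i<Suc m. U j i * cnj (U l i)) = (if j = l then 1 else 0)"
      by (cases j; cases l) (simp_all only: sum.lessThan_Suc_shift U, simp_all add: row3)
  qed
  moreover have "\<forall>i<Suc m. \<forall>i'<Suc m. A i i' = (\<Sum>j<Suc m. U i j * complex_of_real (lam j) * cnj (U i' j))"
  proof (intro allI impI)
    fix j l assume "j < Suc m" "l < Suc m"
    then show "A j l = (\<Sum>i<Suc m. U j i * complex_of_real (lam i) * cnj (U l i))"
      using A00 A0l Ak0 A3 R3
      by (cases j; cases l) (simp_all add: U L sum.lessThan_Suc_shift del: sum.lessThan_Suc)
  qed
  ultimately show ?thesis
    unfolding eigendecomp_def by blast
qed

lemma hermitian_deflation:
  assumes n: "0 < n" and hermR: "mat_eq n (adjoint R) R"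
  shows "\<exists>H r. mat_eq n (adjoint H) H \<and> mat_eq n (mmul n H H) ident
    \<and> mat_eq n (adjoint (mmul n (mmul n H R) H)) (mmul n (mmul n H R) H)
    \<and> (\<forall>k<n. mmul n (mmul n H R) H k 0 = (if k = 0 then complex_of_real r else 0))"
proof -
  obtain e w where w1: "(\<Sum>i<n. w i * cnj (w i)) = 1"
    and ew: "\<forall>i<n. (\<Sum>j<n. R i j * w j) = e * w i"
    using unit_eigenvector_exists[OF n] by blast
  obtain u c where c: "c \<noteq> 0" and colH: "\<forall>i<n. householder n u i 0 = c * w i"
    using householder_first_column[OF n w1] by blast
  define H where "H = householder n u"
  have hermH: "mat_eq n (adjoint H) H" and unitH: "mat_eq n (mmul n H H) ident"
    unfolding H_def by (simp_all add: householder_adjoint householder_square)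
  define A where "A = mmul n (mmul n H R) H"
  have RH: "mmul n R H i 0 = e * H i 0" if "i < n" for i
  proof -
    have "mmul n R H i 0 = c * (\<Sum>j<n. R i j * w j)"
      unfolding mmul_def using colH by (simp add: H_def sum_distrib_left mult_ac)
    then show ?thesis
      using ew that colH by (simp add: H_def)
  qed
  have Acol: "A k 0 = e * ident k 0" if "k < n" for k
  proof -
    have "A k 0 = mmul n H (mmul n R H) k 0"
      unfolding A_def by (simp add: mmul_assoc)
    also have "\<dots> = e * mmul n H H k 0"
      unfolding mmul_def[of n H] using RH by (simp add: sum_distrib_left mult_ac)
    also have "\<dots> = e * ident k 0"
      using unitH that n unfolding mat_eq_def by simp
    finally show ?thesis .
  qed
  have "adjoint A = mmul n (adjoint H) (mmul n (adjoint R) (adjoint H))"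
    unfolding A_def by (simp add: adjoint_mmul mmul_assoc)
  also have "mat_eq n \<dots> (mmul n H (mmul n R H))"
    by (rule mmul_cong[OF hermH], rule mmul_cong[OF hermR hermH])
  also have "\<dots> = A"
    unfolding A_def by (simp add: mmul_assoc)
  finally have hermA: "mat_eq n (adjoint A) A" .
  have "A 0 0 = e"
    using Acol[OF n] by (simp add: ident_def)
  moreover have "cnj (A 0 0) = A 0 0"
    using hermA n unfolding mat_eq_def adjoint_def by simp
  ultimately have "cnj e = e"
    by simp
  then have "e = complex_of_real (Re e)"
    by (metis Reals_cnj_iff complex_is_Real_iff of_real_Re)
  then have "\<forall>k<n. A k 0 = (if k = 0 then complex_of_real (Re e) else 0)"
    using Acol unfolding ident_def by auto
  with hermH unitH hermA show ?thesis
    unfolding A_def by blast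
qed

theorem hermitian_eigendecomp:
  assumes "mat_eq n (adjoint R) R"
  shows "\<exists>U lam. eigendecomp n R U lam"
  using assms
proof (induction n arbitrary: R)
  case 0
  show ?case
    by (auto simp: eigendecomp_def orth_cols_def orth_rows_def)
next
  case (Suc m R)
  obtain H r where hermH: "mat_eq (Suc m) (adjoint H) H" and unitH: "mat_eq (Suc m) (mmul (Suc m) H H) ident"
    and hermA: "mat_eq (Suc m) (adjoint (mmul (Suc m) (mmul (Suc m) H R) H)) (mmul (Suc m) (mmul (Suc m) H R) H)"
    and colA: "\<forall>k<Suc m. mmul (Suc m) (mmul (Suc m) H R) H k 0 = (if k = 0 then complex_of_real r else 0)"
    using hermitian_deflation[OF _ Suc.prems] by blast
  define A where "A = mmul (Suc m) (mmul (Suc m) H R) H"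
  have A: "A k l = cnj (A l k)" if "k < Suc m" "l < Suc m" for k l
    using hermA that unfolding A_def mat_eq_def adjoint_def by (metis complex_cnj_cnj)
  define A3 where "A3 a b = A (Suc a) (Suc b)" for a b
  have "mat_eq m (adjoint A3) A3"
    unfolding mat_eq_def adjoint_def A3_def
  proof (intro allI impI)
    fix a b assume "a < m" "b < m"
    then show "cnj (A (Suc b) (Suc a)) = A (Suc a) (Suc b)"
      using A[of "Suc a" "Suc b"] by simp
  qed
  then obtain U3 lam3 where dec3: "eigendecomp m A3 U3 lam3"
    using Suc.IH by blast
  have "A 0 0 = complex_of_real r" "\<forall>k<m. A (Suc k) 0 = 0"
    using colA unfolding A_def by auto
  moreover have "\<forall>l<m. A 0 (Suc l) = 0"
  proof (intro allI impI)
    fix l assume "l < m"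
    then have "A 0 (Suc l) = cnj (A (Suc l) 0)"
      by (intro A) auto
    also have "A (Suc l) 0 = 0"
      using colA \<open>l < m\<close> unfolding A_def by simp
    finally show "A 0 (Suc l) = 0"
      by simp
  qed
  ultimately have "eigendecomp (Suc m) A
      (\<lambda>k j. if k = 0 then (if j = 0 then 1 else 0) else if j = 0 then 0 else U3 (k-1) (j-1))
      (\<lambda>j. if j = 0 then r else lam3 (j - 1))"
    by (intro eigendecomp_block[OF dec3]) (auto simp: A3_def)
  then show ?case
    unfolding A_def using eigendecomp_conj[OF hermH unitH] by blast
qed

section \<open>Von Neumann entropy of a function-matrix\<close>

definition entropy :: "nat \<Rightarrow> (nat \<Rightarrow> nat \<Rightarrow> complex) \<Rightarrow> real" where
  "entropy n R = vN_entropy (mat n n (\<lambda>(i,j). R i j))"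

lemma entropy_cong: "mat_eq n R R' \<Longrightarrow> entropy n R = entropy n R'"
proof -
  assume "mat_eq n R R'"
  then have "mat n n (\<lambda>(i,j). R i j) = mat n n (\<lambda>(i,j). R' i j)"
    unfolding mat_eq_def by (intro eq_matI) auto
  then show ?thesis
    unfolding entropy_def by simp
qed

lemma entropy_transpose: "entropy n (\<lambda>i j. R j i) = entropy n R"
proof -
  have "mat n n (\<lambda>(i,j). R j i) = transpose_mat (mat n n (\<lambda>(i,j). R i j))"
    by (intro eq_matI) auto
  moreover have "char_poly (transpose_mat (mat n n (\<lambda>(i,j). R i j))) = char_poly (mat n n (\<lambda>(i,j). R i j))"
    by (rule char_poly_transpose_mat[of _ n]) simp
  ultimately show ?thesis
    unfolding entropy_def vN_entropy_def by simp
qed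

lemma order_linear: "order z [:- a, 1:] = (if z = a then 1 else 0)"
proof (cases "z = a")
  case True
  then show ?thesis using order_power_n_n[of a 1] by simp
next
  case False
  then have "poly [:- a, 1:] z \<noteq> 0" by simp
  with False show ?thesis by (simp add: order_0I)
qed

lemma order_prod_linear:
  fixes c :: "nat \<Rightarrow> complex"
  shows "order z (\<Prod>i<n. [:- c i, 1:]) = card {i. i < n \<and> c i = z}"
proof (induction n)
  case 0
  then show ?case by simp
next
  case (Suc n)
  have "(\<Prod>i<n. [:- c i, 1:]) \<noteq> 0" "[:- c n, 1:] \<noteq> 0"
    by (simp_all add: prod_zero_iff)
  then have "(\<Prod>i<n. [:- c i, 1:]) * [:- c n, 1:] \<noteq> 0"
    by (metis mult_eq_0_iff)
  then have "order z (\<Prod>i<Suc n. [:- c i, 1:]) = order z (\<Prod>i<n. [:- c i, 1:]) + order z [:- c n, 1:]"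
    unfolding prod.lessThan_Suc by (rule order_mult)
  also have "\<dots> = card {i. i < n \<and> c i = z} + (if z = c n then 1 else 0)"
    using Suc.IH by (simp add: order_linear)
  also have "\<dots> = card {i. i < Suc n \<and> c i = z}"
  proof (cases "c n = z")
    case True
    then have "{i. i < Suc n \<and> c i = z} = insert n {i. i < n \<and> c i = z}" by auto
    with True show ?thesis by simp
  next
    case False
    then have "{i. i < Suc n \<and> c i = z} = {i. i < n \<and> c i = z}"
      using less_Suc_eq by auto
    with False show ?thesis by auto
  qed
  finally show ?case .
qed

lemma vN_entropy_split:
  fixes lam :: "nat \<Rightarrow> real"
  assumes "char_poly A = (\<Prod>i<n. [:- complex_of_real (lam i), 1:])"
  shows "vN_entropy A = (\<Sum>i<n. eta (lam i))"
proof -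
  define c where "c i = complex_of_real (lam i)" for i
  define p where "p = (\<Prod>i<n. [:- c i, 1:])"
  have cp: "char_poly A = p"
    unfolding p_def c_def using assms by simp
  have roots: "{z. poly p z = 0} = c ` {..<n}"
    unfolding p_def poly_prod by (auto simp: prod_zero_iff)
  have "(\<Sum>z\<in>{z. poly p z = 0}. real (order z p) * xlog2x (Re z))
      = (\<Sum>z\<in>c ` {..<n}. \<Sum>i\<in>{i\<in>{..<n}. c i = z}. xlog2x (Re (c i)))"
  proof (unfold roots, rule sum.cong[OF refl])
    fix z assume "z \<in> c ` {..<n}"
    have "order z p = card {i\<in>{..<n}. c i = z}"
      unfolding p_def order_prod_linear by simp
    moreover have "(\<Sum>i\<in>{i\<in>{..<n}. c i = z}. xlog2x (Re (c i))) = (\<Sum>i\<in>{i\<in>{..<n}. c i = z}. xlog2x (Re z))"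
      by (rule sum.cong) auto
    ultimately show "real (order z p) * xlog2x (Re z) = (\<Sum>i\<in>{i\<in>{..<n}. c i = z}. xlog2x (Re (c i)))"
      by simp
  qed
  also have "\<dots> = (\<Sum>i<n. xlog2x (Re (c i)))"
    by (rule sum.image_gen[symmetric]) simp
  finally show ?thesis
    unfolding vN_entropy_def cp eta_def c_def by (simp add: sum_negf)
qed

lemma char_poly_eigendecomp:
  assumes "eigendecomp n R U lam"
  shows "char_poly (mat n n (\<lambda>(i,j). R i j)) = (\<Prod>i<n. [:- complex_of_real (lam i), 1:])"
proof -
  have col: "\<And>j l. j < n \<Longrightarrow> l < n \<Longrightarrow> (\<Sum>i<n. cnj (U i j) * U i l) = (if j = l then 1 else 0)"
    and row: "\<And>i i'. i < n \<Longrightarrow> i' < n \<Longrightarrow> (\<Sum>j<n. U i j * cnj (U i' j)) = (if i = i' then 1 else 0)"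
    and R: "\<And>i i'. i < n \<Longrightarrow> i' < n \<Longrightarrow> R i i' = (\<Sum>j<n. U i j * complex_of_real (lam j) * cnj (U i' j))"
    using assms unfolding eigendecomp_def orth_cols_def orth_rows_def by auto
  define A :: "complex mat" where "A = mat n n (\<lambda>(i,j). R i j)"
  define Um :: "complex mat" where "Um = mat n n (\<lambda>(i,j). U i j)"
  define Uh :: "complex mat" where "Uh = mat n n (\<lambda>(i,j). cnj (U j i))"
  define Dm :: "complex mat" where "Dm = mat n n (\<lambda>(i,j). if i = j then complex_of_real (lam i) else 0)"
  have carr: "A \<in> carrier_mat n n" "Um \<in> carrier_mat n n" "Uh \<in> carrier_mat n n" "Dm \<in> carrier_mat n n"
    unfolding A_def Um_def Uh_def Dm_def by auto
  have UD: "(Um * Dm) $$ (i, k) = U i k * complex_of_real (lam k)" if "i < n" "k < n" for i k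
  proof -
    have "(Um * Dm) $$ (i, k) = (\<Sum>l<n. U i l * (if l = k then complex_of_real (lam l) else 0))"
      using that unfolding Um_def Dm_def by (simp add: scalar_prod_def atLeast0LessThan)
    also have "\<dots> = U i k * complex_of_real (lam k)"
      using sum_delta_right[OF that(2), of "\<lambda>l. U i l * complex_of_real (lam l)"]
      by (simp add: if_distrib cong: if_cong)
    finally show ?thesis .
  qed
  have "A = Um * Dm * Uh"
  proof (rule eq_matI)
    fix i j assume "i < dim_row (Um * Dm * Uh)" "j < dim_col (Um * Dm * Uh)"
    then have ij: "i < n" "j < n"
      using carr by auto
    have "(Um * Dm * Uh) $$ (i,j) = (\<Sum>k<n. (Um * Dm) $$ (i, k) * cnj (U j k))"
      using ij carr unfolding Uh_def by (simp add: scalar_prod_def atLeast0LessThan)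
    also have "\<dots> = R i j"
      using ij by (simp add: UD R)
    finally show "A $$ (i,j) = (Um * Dm * Uh) $$ (i,j)"
      using ij unfolding A_def by simp
  qed (use carr in auto)
  moreover have "Um * Uh = 1\<^sub>m n"
    by (rule eq_matI) (use carr in \<open>auto simp: Um_def Uh_def scalar_prod_def atLeast0LessThan row\<close>)
  moreover have "Uh * Um = 1\<^sub>m n"
    by (rule eq_matI) (use carr in \<open>auto simp: Um_def Uh_def scalar_prod_def atLeast0LessThan col\<close>)
  ultimately have "similar_mat A Dm"
    using carr by (intro similar_matI[of _ _ Um Uh n]) auto
  then have "char_poly A = char_poly Dm"
    by (rule char_poly_similar)
  also have "char_poly Dm = (\<Prod>a\<leftarrow>diag_mat Dm. [:- a, 1:])"
    by (rule char_poly_upper_triangular[OF carr(4)]) (auto simp: Dm_def upper_triangular_def)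
  also have "\<dots> = prod_list (map (\<lambda>i. [:- complex_of_real (lam i), 1:]) [0..<n])"
    unfolding diag_mat_def Dm_def by (auto intro!: arg_cong[where f=prod_list])
  also have "\<dots> = (\<Prod>i<n. [:- complex_of_real (lam i), 1:])"
    by (simp add: prod.distinct_set_conv_list[symmetric] atLeast0LessThan)
  finally show ?thesis
    unfolding A_def .
qed

lemma entropy_eigendecomp:
  assumes "eigendecomp n R U lam"
  shows "entropy n R = (\<Sum>j<n. eta (lam j))"
  unfolding entropy_def by (rule vN_entropy_split[OF char_poly_eigendecomp[OF assms]])

section \<open>Entropy estimates for ensembles\<close>

lemma outer_sum_hermitian: "mat_eq n (adjoint (outer_sum K v)) (outer_sum K v)"
  unfolding mat_eq_def adjoint_def by (metis outer_sum_herm complex_cnj_cnj)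

text \<open>Coordinates of the ensemble vectors v k in an orthonormal basis u j (columns of U):
  coef n v U j k = <v k | u j>.  For fixed j this is a K-vector.\<close>
definition coef :: "nat \<Rightarrow> (nat \<Rightarrow> nat \<Rightarrow> complex) \<Rightarrow> (nat \<Rightarrow> nat \<Rightarrow> complex) \<Rightarrow> nat \<Rightarrow> nat \<Rightarrow> complex" where
  "coef n v U j k = (\<Sum>i<n. cnj (v k i) * U i j)"

lemma coef_inner:
  "(\<Sum>k<K. cnj (coef n v U j k) * coef n v U l k)
     = (\<Sum>i<n. \<Sum>i'<n. cnj (U i j) * outer_sum K v i i' * U i' l)"
proof -
  have "(\<Sum>k<K. cnj (coef n v U j k) * coef n v U l k)
      = (\<Sum>k<K. \<Sum>i'<n. \<Sum>i<n. cnj (U i j) * (v k i * cnj (v k i')) * U i' l)"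
    unfolding coef_def by (intro sum.cong refl) (simp add: sum_product mult_ac)
  also have "\<dots> = (\<Sum>i'<n. \<Sum>i<n. \<Sum>k<K. cnj (U i j) * (v k i * cnj (v k i')) * U i' l)"
    by (subst sum_swap3[symmetric]) (rule refl)
  also have "\<dots> = (\<Sum>i'<n. \<Sum>i<n. cnj (U i j) * outer_sum K v i i' * U i' l)"
    unfolding outer_sum_def by (simp add: sum_distrib_left sum_distrib_right)
  also have "\<dots> = (\<Sum>i<n. \<Sum>i'<n. cnj (U i j) * outer_sum K v i i' * U i' l)"
    by (rule sum.swap)
  finally show ?thesis .
qed

lemma norm2_coef:
  "complex_of_real (norm2 K (coef n v U j)) = (\<Sum>i<n. \<Sum>i'<n. cnj (U i j) * outer_sum K v i i' * U i' j)"
  unfolding of_real_norm2 coef_inner[symmetric] by (simp add: mult.commute)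

lemma outer_sum_coef:
  assumes "orth_rows n U"
  shows "mat_eq K (outer_sum n (coef n v U)) (outer_sum n (conj_transp v))"
  unfolding mat_eq_def
proof (intro allI impI)
  fix k k'
  have row: "\<And>i i'. i < n \<Longrightarrow> i' < n \<Longrightarrow> (\<Sum>j<n. U i j * cnj (U i' j)) = (if i = i' then 1 else 0)"
    using assms unfolding orth_rows_def by auto
  have "outer_sum n (coef n v U) k k' = (\<Sum>j<n. \<Sum>i<n. \<Sum>i'<n. cnj (v k i) * v k' i' * (U i j * cnj (U i' j)))"
    unfolding outer_sum_def coef_def
    by (intro sum.cong refl) (simp add: sum_product mult_ac)
  also have "\<dots> = (\<Sum>i<n. \<Sum>i'<n. \<Sum>j<n. cnj (v k i) * v k' i' * (U i j * cnj (U i' j)))"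
    by (subst sum_swap3[symmetric]) (rule refl)
  also have "\<dots> = (\<Sum>i<n. \<Sum>i'<n. cnj (v k i) * v k' i' * (if i = i' then 1 else 0))"
    by (intro sum.cong refl) (simp add: sum_distrib_left[symmetric] row)
  also have "\<dots> = outer_sum n (conj_transp v) k k'"
    unfolding outer_sum_def conj_transp_def by (simp add: if_distrib if_distribR sum.If_cases)
  finally show "outer_sum n (coef n v U) k k' = outer_sum n (conj_transp v) k k'" .
qed

lemma parseval_coef:
  assumes "orth_rows n U"
  shows "(\<Sum>j<n. (cmod (coef n v U j k))\<^sup>2) = norm2 n (v k)"
proof -
  have "complex_of_real (\<Sum>j<n. (cmod (coef n v U j k))\<^sup>2) = outer_sum n (coef n v U) k k"
    unfolding outer_sum_def of_real_sum complex_norm_square ..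
  also have "\<dots> = outer_sum n (conj_transp v) k k"
    using outer_sum_coef[OF assms, of "Suc k" v] unfolding mat_eq_def by simp
  also have "\<dots> = complex_of_real (norm2 n (v k))"
    unfolding outer_sum_def conj_transp_def of_real_norm2 by (simp add: mult.commute)
  finally show ?thesis
    by (simp only: of_real_eq_iff)
qed

lemma sum_norm2_coef:
  assumes "orth_rows n U"
  shows "(\<Sum>j<n. norm2 K (coef n v U j)) = (\<Sum>k<K. norm2 n (v k))"
  unfolding norm2_def[of K] using parseval_coef[OF assms] by (subst sum.swap) simp

lemma eigendecomp_outer_sum:
  assumes "eigendecomp n (outer_sum K v) U lam" "j < n" "l < n"
  shows "(\<Sum>k<K. cnj (coef n v U j k) * coef n v U l k) = (if j = l then complex_of_real (lam j) else 0)"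
  unfolding coef_inner using eigendecomp_quad[OF assms] .

lemma eigenvalue_outer_sum:
  assumes "eigendecomp n (outer_sum K v) U lam" "j < n"
  shows "lam j = norm2 K (coef n v U j)"
  using eigendecomp_quad[OF assms(1,2,2)] unfolding norm2_coef[symmetric] by simp

lemma orthonormal_coord_le:
  fixes e :: "'j \<Rightarrow> nat \<Rightarrow> complex"
  assumes J: "finite J"
    and orth: "\<And>j l. j \<in> J \<Longrightarrow> l \<in> J \<Longrightarrow> (\<Sum>k<K. cnj (e j k) * e l k) = (if j = l then 1 else 0)"
    and k: "k < K"
  shows "(\<Sum>j\<in>J. (cmod (e j k))\<^sup>2) \<le> 1"
proof -
  define T where "T = (\<Sum>j\<in>J. (cmod (e j k))\<^sup>2)"
  define c where "c k' = (\<Sum>j\<in>J. e j k' * cnj (e j k))" for k'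
  have cT: "c k = complex_of_real T"
    unfolding c_def T_def of_real_sum complex_norm_square ..
  have "(\<Sum>k'<K. c k' * cnj (c k')) = (\<Sum>k'<K. \<Sum>j\<in>J. \<Sum>l\<in>J. (cnj (e l k') * e j k') * (cnj (e j k) * e l k))"
    unfolding c_def by (simp add: sum_product mult_ac)
  also have "\<dots> = (\<Sum>j\<in>J. \<Sum>l\<in>J. \<Sum>k'<K. (cnj (e l k') * e j k') * (cnj (e j k) * e l k))"
    by (subst sum_swap3[symmetric]) (rule refl)
  also have "\<dots> = (\<Sum>j\<in>J. \<Sum>l\<in>J. (if l = j then 1 else 0) * (cnj (e j k) * e l k))"
    using orth by (simp add: sum_distrib_right[symmetric])
  also have "\<dots> = (\<Sum>j\<in>J. cnj (e j k) * e j k)"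
  proof (rule sum.cong[OF refl])
    fix j assume "j \<in> J"
    have "(\<Sum>l\<in>J. (if l = j then 1 else 0) * (cnj (e j k) * e l k))
        = (\<Sum>l\<in>J. if l = j then cnj (e j k) * e l k else 0)"
      by (rule sum.cong) auto
    with J \<open>j \<in> J\<close> show "(\<Sum>l\<in>J. (if l = j then 1 else 0) * (cnj (e j k) * e l k)) = cnj (e j k) * e j k"
      by simp
  qed
  also have "\<dots> = c k"
    unfolding c_def by (simp add: mult.commute)
  finally have "T = (\<Sum>k'<K. (cmod (c k'))\<^sup>2)"
    unfolding cT of_real_norm2[symmetric, unfolded norm2_def] by (simp only: of_real_eq_iff)
  also have "\<dots> \<ge> (cmod (c k))\<^sup>2"
    using k by (intro member_le_sum) auto
  finally have "T * T \<le> T"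
    unfolding cT by (simp add: power2_eq_square)
  moreover have "0 \<le> T"
    unfolding T_def by (intro sum_nonneg) auto
  ultimately show ?thesis
    unfolding T_def[symmetric] by (cases "T = 0") (auto simp: mult_le_cancel_right1)
qed

lemma eigen_coord_weights_le:
  assumes dec: "eigendecomp n (outer_sum K v) U lam" and k: "k < K"
  shows "(\<Sum>j<n. (cmod (coef n v U j k))\<^sup>2 / lam j) \<le> 1"
proof -
  define J where "J = {j. j < n \<and> 0 < lam j}"
  define e where "e j k = coef n v U j k / complex_of_real (sqrt (lam j))" for j k
  have lam0: "0 \<le> lam j" if "j < n" for j
    using eigenvalue_outer_sum[OF dec that] norm2_nonneg by simp
  have "(\<Sum>j<n. (cmod (coef n v U j k))\<^sup>2 / lam j) = (\<Sum>j\<in>J. (cmod (coef n v U j k))\<^sup>2 / lam j)"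
    unfolding J_def using lam0 by (intro sum.mono_neutral_right) (auto simp: less_le)
  also have "\<dots> = (\<Sum>j\<in>J. (cmod (e j k))\<^sup>2)"
    unfolding J_def e_def by (intro sum.cong refl) (simp add: norm_divide power_divide)
  also have "\<dots> \<le> 1"
  proof (rule orthonormal_coord_le[OF _ _ k])
    show "finite J"
      unfolding J_def by simp
    fix j l assume "j \<in> J" "l \<in> J"
    then have jl: "j < n" "l < n" "0 < lam j" "0 < lam l"
      unfolding J_def by auto
    have "(\<Sum>k<K. cnj (e j k) * e l k)
        = (\<Sum>k<K. cnj (coef n v U j k) * coef n v U l k) / complex_of_real (sqrt (lam j) * sqrt (lam l))"
      unfolding e_def by (simp add: sum_divide_distrib)
    also have "\<dots> = (if j = l then 1 else 0)"
      using jl eigendecomp_outer_sum[OF dec jl(1,2)] by (simp flip: of_real_mult)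
    finally show "(\<Sum>k<K. cnj (e j k) * e l k) = (if j = l then 1 else 0)" .
  qed
  finally show ?thesis .
qed

theorem entropy_le_ensemble: "entropy n (outer_sum K v) \<le> (\<Sum>k<K. eta (norm2 n (v k)))"
proof -
  obtain U lam where dec: "eigendecomp n (outer_sum K v) U lam"
    using hermitian_eigendecomp[OF outer_sum_hermitian] by blast
  have lam: "lam j = norm2 K (coef n v U j)" if "j < n" for j
    using eigenvalue_outer_sum[OF dec that] .
  have lam0: "0 \<le> lam j" if "j < n" for j
    using lam[OF that] norm2_nonneg by simp
  define Q where "Q k j = (cmod (coef n v U j k))\<^sup>2 / lam j" for k j
  have Qlam: "Q k j * lam j = (cmod (coef n v U j k))\<^sup>2" if "j < n" "k < K" for j k
  proof (cases "lam j = 0")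
    case True
    then have "norm2 K (coef n v U j) = 0"
      using lam[OF that(1)] by simp
    then have "coef n v U j k = 0"
      using that(2) unfolding norm2_def by (subst (asm) sum_nonneg_eq_0_iff) auto
    then show ?thesis
      unfolding Q_def by simp
  qed (simp add: Q_def)
  have "entropy n (outer_sum K v) = (\<Sum>j<n. eta (lam j))"
    by (rule entropy_eigendecomp[OF dec])
  also have "\<dots> \<le> (\<Sum>k<K. eta (\<Sum>j<n. Q k j * lam j))"
  proof (rule eta_substochastic)
    show "\<And>k. k \<in> {..<K} \<Longrightarrow> sum (Q k) {..<n} \<le> 1"
      using eigen_coord_weights_le[OF dec] unfolding Q_def by simp
    show "\<And>j. j \<in> {..<n} \<Longrightarrow> 0 < lam j \<Longrightarrow> (\<Sum>k<K. Q k j) = 1"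
      using lam unfolding Q_def norm2_def by (simp add: sum_divide_distrib[symmetric])
  qed (use lam0 in \<open>auto simp: Q_def\<close>)
  also have "\<dots> = (\<Sum>k<K. eta (norm2 n (v k)))"
    using parseval_coef[of n U v] dec unfolding eigendecomp_def
    by (intro sum.cong refl) (simp add: Qlam)
  finally show ?thesis .
qed

lemma entropy_gram_le_diagonal:
  assumes "orth_rows n U"
  shows "entropy K (outer_sum n (conj_transp v)) \<le> (\<Sum>j<n. eta (norm2 K (coef n v U j)))"
proof -
  have "entropy K (outer_sum n (conj_transp v)) = entropy K (outer_sum n (coef n v U))"
    by (rule entropy_cong[OF mat_eq_sym[OF outer_sum_coef[OF assms]]])
  also have "\<dots> \<le> (\<Sum>j<n. eta (norm2 K (coef n v U j)))"
    by (rule entropy_le_ensemble)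
  finally show ?thesis .
qed

text \<open>Schmidt symmetry: sum_k |v k><v k| and the Gram matrix of the v k have the same
  entropy (the two reduced states of a pure bipartite state).\<close>
theorem entropy_gram: "entropy n (outer_sum K v) = entropy K (outer_sum n (conj_transp v))"
proof -
  have le: "entropy L (outer_sum m (conj_transp w)) \<le> entropy m (outer_sum L w)" for m L w
  proof -
    obtain U lam where dec: "eigendecomp m (outer_sum L w) U lam"
      using hermitian_eigendecomp[OF outer_sum_hermitian] by blast
    then have "entropy L (outer_sum m (conj_transp w)) \<le> (\<Sum>j<m. eta (norm2 L (coef m w U j)))"
      unfolding eigendecomp_def by (intro entropy_gram_le_diagonal) simp
    also have "\<dots> = entropy m (outer_sum L w)"
      using eigenvalue_outer_sum[OF dec] by (simp add: entropy_eigendecomp[OF dec])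
    finally show ?thesis .
  qed
  show ?thesis
    using le[where m=K and L=n and w="conj_transp v"] le[where m=n and L=K and w=v] by simp
qed

lemma entropy_le_diagonal:
  assumes "orth_rows n U"
  shows "entropy n (outer_sum K v) \<le> (\<Sum>j<n. eta (norm2 K (coef n v U j)))"
  unfolding entropy_gram[of n K v] using entropy_gram_le_diagonal[OF assms] .

text \<open>A part of weight s of a state, renormalised, has entropy at most S(R)/s.  This is the
  concavity estimate behind the lower bound on S(rho_A) and S(rho_B).\<close>
theorem entropy_part_le:
  assumes R: "mat_eq n R (\<lambda>i i'. outer_sum K v i i' + outer_sum K w i i')"
    and s: "s = (\<Sum>k<K. norm2 n (v k))" "(\<Sum>k<K. norm2 n (w k)) = 1 - s" "0 < s"
  shows "s * entropy n (outer_sum K (\<lambda>k i. v k i / complex_of_real (sqrt s))) \<le> entropy n R"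
proof -
  have "mat_eq n (adjoint R) R"
    using R unfolding mat_eq_def adjoint_def outer_sum_def by (simp add: mult.commute)
  then obtain U nu where dec: "eigendecomp n R U nu"
    using hermitian_eigendecomp by blast
  then have row: "orth_rows n U"
    unfolding eigendecomp_def by simp
  define d where "d j = norm2 K (coef n v U j)" for j
  define d' where "d' j = norm2 K (coef n w U j)" for j
  have nu: "nu j = d j + d' j" if "j < n" for j
  proof -
    have "complex_of_real (nu j) = (\<Sum>i<n. \<Sum>i'<n. cnj (U i j) * R i i' * U i' j)"
      using eigendecomp_quad[OF dec that that] by simp
    also have "\<dots> = complex_of_real (d j) + complex_of_real (d' j)"
      using R unfolding d_def d'_def norm2_coef mat_eq_def
      by (simp add: sum.distrib[symmetric] algebra_simps)
    finally show ?thesis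
      by (metis of_real_add of_real_eq_iff)
  qed
  have d0: "0 \<le> d j" "0 \<le> d' j" for j
    unfolding d_def d'_def by (simp_all add: norm2_nonneg)
  have "(\<Sum>j<n. d' j) = 1 - s"
    unfolding d'_def sum_norm2_coef[OF row] using s(2) .
  then have d'_le: "d' j \<le> 1 - s" if "j < n" for j
    using that d0 member_le_sum[of j "{..<n}" d'] by simp
  have "0 \<le> (\<Sum>k<K. norm2 n (w k))"
    by (intro sum_nonneg norm2_nonneg)
  then have s1: "s \<le> 1"
    using s(2) by simp
  have "entropy n (outer_sum K (\<lambda>k i. v k i / complex_of_real (sqrt s)))
      \<le> (\<Sum>j<n. eta (norm2 K (coef n (\<lambda>k i. v k i / complex_of_real (sqrt s)) U j)))"
    by (rule entropy_le_diagonal[OF row])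
  also have "\<dots> = (\<Sum>j<n. eta (d j / s))"
    unfolding d_def norm2_def coef_def using s(3)
    by (simp add: sum_divide_distrib[symmetric] norm_divide power_divide)
  finally have "s * entropy n (outer_sum K (\<lambda>k i. v k i / complex_of_real (sqrt s)))
      \<le> (\<Sum>j<n. s * eta (d j / s))"
    unfolding sum_distrib_left[symmetric] by (rule mult_left_mono[OF _ less_imp_le[OF s(3)]])
  also have "\<dots> \<le> (\<Sum>j<n. eta (nu j))"
    using eta_rescale_le[OF d0 s(3) s1] d'_le nu by (intro sum_mono) auto
  also have "\<dots> = entropy n R"
    by (rule entropy_eigendecomp[OF dec, symmetric])
  finally show ?thesis .
qed

lemma eigen_ensemble:
  assumes dec: "eigendecomp n R U lam" and lam0: "\<And>j. j < n \<Longrightarrow> 0 \<le> lam j"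
  defines "E \<equiv> (\<lambda>j i. complex_of_real (sqrt (lam j)) * U i j)"
  shows "mat_eq n (outer_sum n E) R" and "\<And>j. j < n \<Longrightarrow> norm2 n (E j) = lam j"
proof -
  have col: "\<And>j. j < n \<Longrightarrow> (\<Sum>i<n. cnj (U i j) * U i j) = 1"
    and R: "\<And>i i'. i < n \<Longrightarrow> i' < n \<Longrightarrow> R i i' = (\<Sum>j<n. U i j * complex_of_real (lam j) * cnj (U i' j))"
    using dec unfolding eigendecomp_def orth_cols_def by auto
  have sq: "complex_of_real (sqrt (lam j)) * complex_of_real (sqrt (lam j)) = complex_of_real (lam j)"
    if "j < n" for j
    using lam0[OF that] by (simp flip: of_real_mult)
  show "mat_eq n (outer_sum n E) R"
    unfolding mat_eq_def outer_sum_def E_def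
    using R sq by (auto intro!: sum.cong simp: mult_ac)
  show "norm2 n (E j) = lam j" if "j < n" for j
  proof -
    have "complex_of_real (norm2 n (E j)) = complex_of_real (lam j) * (\<Sum>i<n. cnj (U i j) * U i j)"
      unfolding of_real_norm2 E_def using sq[OF that] by (simp add: sum_distrib_left mult_ac)
    then show ?thesis
      using col[OF that] by simp
  qed
qed

lemma eigendecomp_outer_sum_nonneg:
  assumes "eigendecomp n (outer_sum K v) U lam" "j < n"
  shows "0 \<le> lam j"
  using eigenvalue_outer_sum[OF assms] norm2_nonneg by simp

lemma sum_eigenvalues_outer_sum:
  assumes "eigendecomp n (outer_sum K v) U lam"
  shows "(\<Sum>j<n. lam j) = (\<Sum>k<K. norm2 n (v k))"
  using eigenvalue_outer_sum[OF assms] sum_norm2_coef[of n U K v] assms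
  unfolding eigendecomp_def by simp

lemma sum_lessThan_add:
  fixes f :: "nat \<Rightarrow> 'a :: comm_monoid_add"
  shows "(\<Sum>j<n + m. f j) = (\<Sum>j<n. f j) + (\<Sum>j<m. f (n + j))"
  by (induction m) (simp_all add: add.assoc)

lemma eta_sum_scale:
  assumes "0 \<le> c" "\<And>j. j < n \<Longrightarrow> 0 \<le> l j"
  shows "(\<Sum>j<n. eta (c * l j)) = c * (\<Sum>j<n. eta (l j)) + eta c * (\<Sum>j<n. l j)"
proof -
  have "(\<Sum>j<n. eta (c * l j)) = (\<Sum>j<n. c * eta (l j) + eta c * l j)"
    using assms by (intro sum.cong refl) (simp add: eta_mult mult.commute)
  then show ?thesis
    by (simp add: sum.distrib sum_distrib_left)
qed

theorem entropy_mixture_le: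
  assumes p: "0 \<le> p" "p \<le> 1"
    and tr: "(\<Sum>k<K1. norm2 n (v k)) = 1" "(\<Sum>k<K2. norm2 n (w k)) = 1"
    and R: "mat_eq n R (\<lambda>i i'. complex_of_real p * outer_sum K1 v i i' + complex_of_real (1 - p) * outer_sum K2 w i i')"
  shows "entropy n R \<le> p * entropy n (outer_sum K1 v) + (1 - p) * entropy n (outer_sum K2 w) + h2 p"
proof -
  obtain U1 lam1 where dec1: "eigendecomp n (outer_sum K1 v) U1 lam1"
    using hermitian_eigendecomp[OF outer_sum_hermitian] by blast
  obtain U2 lam2 where dec2: "eigendecomp n (outer_sum K2 w) U2 lam2"
    using hermitian_eigendecomp[OF outer_sum_hermitian] by blast
  note l10 = eigendecomp_outer_sum_nonneg[OF dec1] and l20 = eigendecomp_outer_sum_nonneg[OF dec2]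
  define E1 where "E1 = (\<lambda>j i. complex_of_real (sqrt (lam1 j)) * U1 i j)"
  define E2 where "E2 = (\<lambda>j i. complex_of_real (sqrt (lam2 j)) * U2 i j)"
  define W where "W j i = (if j < n then complex_of_real (sqrt p) * E1 j i
                           else complex_of_real (sqrt (1 - p)) * E2 (j - n) i)" for j i
  have sqrt_mult: "complex_of_real (sqrt x) * a * cnj (complex_of_real (sqrt x) * b) = complex_of_real x * (a * cnj b)"
    if "0 \<le> x" for x a b
    using that by (simp add: mult_ac flip: of_real_mult)
  have "outer_sum (n + n) W i i'
      = complex_of_real p * outer_sum n E1 i i' + complex_of_real (1 - p) * outer_sum n E2 i i'" for i i'
  proof -
    have "(\<Sum>j<n. W j i * cnj (W j i')) = complex_of_real p * outer_sum n E1 i i'"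
      unfolding outer_sum_def sum_distrib_left W_def using p
      by (intro sum.cong refl) (simp add: sqrt_mult flip: of_real_mult)
    moreover have "(\<Sum>j<n. W (n + j) i * cnj (W (n + j) i')) = complex_of_real (1 - p) * outer_sum n E2 i i'"
      unfolding outer_sum_def sum_distrib_left W_def using p
      by (intro sum.cong refl) (simp add: sqrt_mult flip: of_real_mult)
    ultimately show ?thesis
      unfolding outer_sum_def[of "n + n"] sum_lessThan_add by simp
  qed
  then have "mat_eq n (outer_sum (n + n) W) R"
    using R eigen_ensemble(1)[OF dec1 l10] eigen_ensemble(1)[OF dec2 l20]
    unfolding mat_eq_def E1_def E2_def by simp
  then have "entropy n R = entropy n (outer_sum (n + n) W)"
    by (rule entropy_cong[OF mat_eq_sym])
  also have "\<dots> \<le> (\<Sum>j<n + n. eta (norm2 n (W j)))"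
    by (rule entropy_le_ensemble)
  also have "\<dots> = (\<Sum>j<n. eta (p * lam1 j)) + (\<Sum>j<n. eta ((1 - p) * lam2 j))"
    using p eigen_ensemble(2)[OF dec1 l10] eigen_ensemble(2)[OF dec2 l20]
    unfolding sum_lessThan_add W_def E1_def E2_def
    by (simp add: norm2_def norm_mult power_mult_distrib sum_distrib_left[symmetric])
  also have "\<dots> = p * (\<Sum>j<n. eta (lam1 j)) + (1 - p) * (\<Sum>j<n. eta (lam2 j)) + h2 p"
    using eta_sum_scale[of p n lam1] eta_sum_scale[of "1 - p" n lam2] p l10 l20
      sum_eigenvalues_outer_sum[OF dec1] sum_eigenvalues_outer_sum[OF dec2] tr
    by (simp add: h2_eta)
  also have "\<dots> = p * entropy n (outer_sum K1 v) + (1 - p) * entropy n (outer_sum K2 w) + h2 p"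
    by (simp add: entropy_eigendecomp[OF dec1] entropy_eigendecomp[OF dec2])
  finally show ?thesis .
qed

section \<open>Bipartite vectors\<close>

text \<open>A vector of H_A (x) H_B is stored with |i>|j> at index i * dB + j; its amplitude
  matrix f i j = v $ (i * dB + j) is read as the ensemble of its columns (giving Tr_B) or of
  its rows (giving Tr_A).\<close>

lemma index_lt_mult:
  fixes i j n m :: nat
  assumes "i < n" "j < m"
  shows "i * m + j < n * m"
proof -
  have "i * m + j < Suc i * m"
    using assms by simp
  also have "\<dots> \<le> n * m"
    using assms by (intro mult_le_mono1) simp
  finally show ?thesis .
qed

lemma sum_lessThan_mult:
  fixes f :: "nat \<Rightarrow> 'a::comm_monoid_add"
  shows "(\<Sum>x<n * m. f x) = (\<Sum>i<n. \<Sum>j<m. f (i * m + j))"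
proof (induction n)
  case (Suc n)
  have "(\<Sum>x<Suc n * m. f x) = (\<Sum>x<n * m + m. f x)"
    by (simp add: add.commute)
  with Suc.IH show ?case
    by (simp only: sum_lessThan_add) simp
qed simp

lemma sqnorm_amplitudes:
  assumes "v \<in> carrier_vec (dA * dB)" and f: "\<forall>i<dA. \<forall>j<dB. f i j = v $ (i * dB + j)"
  shows "sqnorm v = (\<Sum>i<dA. norm2 dB (f i))" and "sqnorm v = (\<Sum>j<dB. norm2 dA (\<lambda>i. f i j))"
proof -
  show "sqnorm v = (\<Sum>i<dA. norm2 dB (f i))"
    using assms unfolding sqnorm_def norm2_def by (simp add: sum_lessThan_mult)
  then show "sqnorm v = (\<Sum>j<dB. norm2 dA (\<lambda>i. f i j))"
    unfolding norm2_def by (subst sum.swap) simp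
qed

lemma sqnorm_pos:
  assumes "v \<in> carrier_vec d" "v \<noteq> 0\<^sub>v d"
  shows "0 < sqnorm v"
proof -
  obtain x where x: "x < d" "v $ x \<noteq> 0"
    using assms by (metis carrier_vecD eq_vecI index_zero_vec)
  then have "(cmod (v $ x))\<^sup>2 \<le> sqnorm v"
    unfolding sqnorm_def using assms(1) by (intro member_le_sum) auto
  moreover have "0 < (cmod (v $ x))\<^sup>2"
    using x by simp
  ultimately show ?thesis
    by linarith
qed

lemma ent_amplitudes:
  assumes v: "v \<in> carrier_vec (dA * dB)" and s: "sqnorm v = s" "0 < s"
    and f: "\<forall>i<dA. \<forall>j<dB. f i j = v $ (i * dB + j)"
  shows "ent dA dB v = entropy dA (outer_sum dB (\<lambda>j i. f i j / complex_of_real (sqrt s)))"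
    and "ent dA dB v = entropy dB (outer_sum dA (\<lambda>i j. f i j / complex_of_real (sqrt s)))"
proof -
  have ss: "complex_of_real (sqrt s) * complex_of_real (sqrt s) = complex_of_real s"
    using s by (simp flip: of_real_mult)
  have "ptrace_B dA dB ((1 / complex_of_real s) \<cdot>\<^sub>m outer v)
      = mat dA dA (\<lambda>(i, i'). outer_sum dB (\<lambda>j i. f i j / complex_of_real (sqrt s)) i i')"
  proof (rule eq_matI)
    fix i i' assume "i < dim_row (mat dA dA (\<lambda>(i, i'). outer_sum dB (\<lambda>j i. f i j / complex_of_real (sqrt s)) i i'))"
      "i' < dim_col (mat dA dA (\<lambda>(i, i'). outer_sum dB (\<lambda>j i. f i j / complex_of_real (sqrt s)) i i'))"
    then have ii: "i < dA" "i' < dA" by auto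
    have "ptrace_B dA dB ((1 / complex_of_real s) \<cdot>\<^sub>m outer v) $$ (i, i')
        = (\<Sum>j<dB. 1 / complex_of_real s * (f i j * cnj (f i' j)))"
      unfolding ptrace_B_def using ii v f index_lt_mult[OF ii(1)] index_lt_mult[OF ii(2)]
      by (intro trans[OF index_mat(1)] sum.cong) (auto simp: outer_def)
    also have "\<dots> = outer_sum dB (\<lambda>j i. f i j / complex_of_real (sqrt s)) i i'"
      unfolding outer_sum_def by (intro sum.cong refl) (simp add: ss[symmetric] field_simps)
    finally show "ptrace_B dA dB ((1 / complex_of_real s) \<cdot>\<^sub>m outer v) $$ (i, i')
        = mat dA dA (\<lambda>(i, i'). outer_sum dB (\<lambda>j i. f i j / complex_of_real (sqrt s)) i i') $$ (i, i')"
      using ii by simp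
  qed (auto simp: ptrace_B_def)
  then show A: "ent dA dB v = entropy dA (outer_sum dB (\<lambda>j i. f i j / complex_of_real (sqrt s)))"
    unfolding ent_def entropy_def s(1) by simp
  have "outer_sum dA (conj_transp (\<lambda>j i. f i j / complex_of_real (sqrt s)))
      = (\<lambda>j j'. outer_sum dA (\<lambda>i j. f i j / complex_of_real (sqrt s)) j' j)"
    unfolding outer_sum_def conj_transp_def by (intro ext) (simp add: mult.commute)
  then show "ent dA dB v = entropy dB (outer_sum dA (\<lambda>i j. f i j / complex_of_real (sqrt s)))"
    unfolding A entropy_gram[of dA dB]
    using entropy_transpose[of dB "outer_sum dA (\<lambda>i j. f i j / complex_of_real (sqrt s))"] by simp
qed

lemma entropy_partial_traces:
  fixes a b :: real
  assumes \<Psi>: "\<Psi> \<in> carrier_vec (dA * dB)" and \<Phi>: "\<Phi> \<in> carrier_vec (dA * dB)"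
  defines "\<rho> \<equiv> complex_of_real a \<cdot>\<^sub>m outer \<Psi> + complex_of_real b \<cdot>\<^sub>m outer \<Phi>"
    and "\<psi> \<equiv> (\<lambda>i j. \<Psi> $ (i * dB + j))" and "\<phi> \<equiv> (\<lambda>i j. \<Phi> $ (i * dB + j))"
  shows "vN_entropy (ptrace_B dA dB \<rho>) = entropy dA (\<lambda>i i'.
           complex_of_real a * outer_sum dB (\<lambda>j i. \<psi> i j) i i' + complex_of_real b * outer_sum dB (\<lambda>j i. \<phi> i j) i i')"
    and "vN_entropy (ptrace_A dA dB \<rho>) = entropy dB (\<lambda>j j'.
           complex_of_real a * outer_sum dA \<psi> j j' + complex_of_real b * outer_sum dA \<phi> j j')"
proof -
  have \<rho>: "\<rho> $$ (x, y) = complex_of_real a * (\<Psi> $ x * cnj (\<Psi> $ y)) + complex_of_real b * (\<Phi> $ x * cnj (\<Phi> $ y))"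
    if "x < dA * dB" "y < dA * dB" for x y
    using that \<Psi> \<Phi> unfolding \<rho>_def by (simp add: outer_def)
  have "vN_entropy (ptrace_B dA dB \<rho>) = entropy dA (\<lambda>i i'. \<Sum>j<dB. \<rho> $$ (i * dB + j, i' * dB + j))"
    unfolding entropy_def ptrace_B_def ..
  also have "\<dots> = entropy dA (\<lambda>i i'.
      complex_of_real a * outer_sum dB (\<lambda>j i. \<psi> i j) i i' + complex_of_real b * outer_sum dB (\<lambda>j i. \<phi> i j) i i')"
    unfolding outer_sum_def \<psi>_def \<phi>_def
    by (intro entropy_cong) (auto simp: mat_eq_def \<rho> index_lt_mult sum.distrib[symmetric] sum_distrib_left intro!: sum.cong)
  finally show "vN_entropy (ptrace_B dA dB \<rho>) = \<dots>" .
  have "vN_entropy (ptrace_A dA dB \<rho>) = entropy dB (\<lambda>j j'. \<Sum>i<dA. \<rho> $$ (i * dB + j, i * dB + j'))"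
    unfolding entropy_def ptrace_A_def ..
  also have "\<dots> = entropy dB (\<lambda>j j'.
      complex_of_real a * outer_sum dA \<psi> j j' + complex_of_real b * outer_sum dA \<phi> j j')"
    unfolding outer_sum_def \<psi>_def \<phi>_def
    by (intro entropy_cong) (auto simp: mat_eq_def \<rho> index_lt_mult sum.distrib[symmetric] sum_distrib_left intro!: sum.cong)
  finally show "vN_entropy (ptrace_A dA dB \<rho>) = \<dots>" .
qed

section \<open>The superposition bound\<close>

lemma polarization:
  "complex_of_real ((cmod a)\<^sup>2) * (x * cnj y) + complex_of_real ((cmod b)\<^sup>2) * (u * cnj v)
     = (a * x + b * u) * cnj (a * y + b * v) / 2 + (a * x - b * u) * cnj (a * y - b * v) / 2"
  unfolding complex_norm_square by (simp add: field_simps)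

lemma parallelogram:
  "(cmod (a * x + b * y))\<^sup>2 + (cmod (a * x - b * y))\<^sup>2 = 2 * (cmod a)\<^sup>2 * (cmod x)\<^sup>2 + 2 * (cmod b)\<^sup>2 * (cmod y)\<^sup>2"
proof -
  have "complex_of_real ((cmod (a * x + b * y))\<^sup>2 + (cmod (a * x - b * y))\<^sup>2)
      = complex_of_real (2 * (cmod a)\<^sup>2 * (cmod x)\<^sup>2 + 2 * (cmod b)\<^sup>2 * (cmod y)\<^sup>2)"
    unfolding of_real_add of_real_mult complex_norm_square by (simp add: algebra_simps)
  then show ?thesis
    by (simp only: of_real_eq_iff)
qed

text \<open>For R = |alpha|^2 V + |beta|^2 W with V, W of unit trace, the superposition
  g = alpha v + beta w of squared norm s satisfies s S(g / |g|) <= 2 S(R): by polarization R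
  is the sum of the parts g g^*/2 and g' g'^*/2 (g' = alpha v - beta w) of weights s/2 and
  1 - s/2.\<close>
theorem entropy_superposition_le:
  fixes v w :: "nat \<Rightarrow> nat \<Rightarrow> complex" and \<alpha> \<beta> :: complex
  assumes tr: "(\<Sum>k<K. norm2 n (v k)) = 1" "(\<Sum>k<K. norm2 n (w k)) = 1"
    and ab: "(cmod \<alpha>)\<^sup>2 + (cmod \<beta>)\<^sup>2 = 1"
    and s: "s = (\<Sum>k<K. norm2 n (\<lambda>i. \<alpha> * v k i + \<beta> * w k i))" "0 < s"
    and R: "mat_eq n R (\<lambda>i i'. complex_of_real ((cmod \<alpha>)\<^sup>2) * outer_sum K v i i'
                                + complex_of_real ((cmod \<beta>)\<^sup>2) * outer_sum K w i i')"
  shows "s * entropy n (outer_sum K (\<lambda>k i. (\<alpha> * v k i + \<beta> * w k i) / complex_of_real (sqrt s)))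
           \<le> 2 * entropy n R"
proof -
  define g where "g k i = (\<alpha> * v k i + \<beta> * w k i) / complex_of_real (sqrt 2)" for k i
  define g' where "g' k i = (\<alpha> * v k i - \<beta> * w k i) / complex_of_real (sqrt 2)" for k i
  have half: "z / complex_of_real (sqrt 2) * cnj (z' / complex_of_real (sqrt 2)) = z * cnj z' / 2" for z z'
    by (simp flip: of_real_mult)
  have "mat_eq n R (\<lambda>i i'. outer_sum K g i i' + outer_sum K g' i i')"
    unfolding mat_eq_def
  proof (intro allI impI)
    fix i i' assume "i < n" "i' < n"
    then have "R i i' = (\<Sum>k<K. complex_of_real ((cmod \<alpha>)\<^sup>2) * (v k i * cnj (v k i'))
                                + complex_of_real ((cmod \<beta>)\<^sup>2) * (w k i * cnj (w k i')))"
      using R unfolding mat_eq_def outer_sum_def by (simp add: sum.distrib sum_distrib_left)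
    also have "\<dots> = (\<Sum>k<K. (\<alpha> * v k i + \<beta> * w k i) * cnj (\<alpha> * v k i' + \<beta> * w k i') / 2
                        + (\<alpha> * v k i - \<beta> * w k i) * cnj (\<alpha> * v k i' - \<beta> * w k i') / 2)"
      by (intro sum.cong refl) (rule polarization)
    also have "\<dots> = outer_sum K g i i' + outer_sum K g' i i'"
      unfolding outer_sum_def g_def g'_def half by (simp add: sum.distrib)
    finally show "R i i' = outer_sum K g i i' + outer_sum K g' i i'" .
  qed
  moreover have "(\<Sum>k<K. norm2 n (g k)) = s / 2"
    unfolding s(1) g_def norm2_def by (simp add: norm_divide power_divide sum_divide_distrib)
  moreover have "(\<Sum>k<K. norm2 n (g' k)) = 1 - s / 2"
  proof -
    have "s + (\<Sum>k<K. norm2 n (\<lambda>i. \<alpha> * v k i - \<beta> * w k i))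
        = (\<Sum>k<K. \<Sum>i<n. (cmod (\<alpha> * v k i + \<beta> * w k i))\<^sup>2 + (cmod (\<alpha> * v k i - \<beta> * w k i))\<^sup>2)"
      unfolding s(1) norm2_def by (simp add: sum.distrib)
    also have "\<dots> = (\<Sum>k<K. \<Sum>i<n. 2 * (cmod \<alpha>)\<^sup>2 * (cmod (v k i))\<^sup>2 + 2 * (cmod \<beta>)\<^sup>2 * (cmod (w k i))\<^sup>2)"
      by (intro sum.cong refl) (rule parallelogram)
    also have "\<dots> = 2 * (cmod \<alpha>)\<^sup>2 * (\<Sum>k<K. norm2 n (v k)) + 2 * (cmod \<beta>)\<^sup>2 * (\<Sum>k<K. norm2 n (w k))"
      unfolding norm2_def by (simp add: sum.distrib sum_distrib_left mult.assoc)
    also have "\<dots> = 2"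
      using tr ab by simp
    finally show ?thesis
      unfolding g'_def norm2_def
      by (simp add: norm_divide power_divide sum_divide_distrib[symmetric] field_simps)
  qed
  ultimately have "s / 2 * entropy n (outer_sum K (\<lambda>k i. g k i / complex_of_real (sqrt (s / 2)))) \<le> entropy n R"
    using s(2) by (intro entropy_part_le) simp_all
  moreover have "(\<lambda>k i. g k i / complex_of_real (sqrt (s / 2)))
      = (\<lambda>k i. (\<alpha> * v k i + \<beta> * w k i) / complex_of_real (sqrt s))"
    unfolding g_def by (simp add: real_sqrt_divide divide_divide_eq_left flip: of_real_mult)
  ultimately show ?thesis
    by simp
qed

corollary superposition_bounds:
  fixes v w :: "nat \<Rightarrow> nat \<Rightarrow> complex" and \<alpha> \<beta> :: complex
  assumes tr: "(\<Sum>k<K. norm2 n (v k)) = 1" "(\<Sum>k<K. norm2 n (w k)) = 1"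
    and ab: "(cmod \<alpha>)\<^sup>2 + (cmod \<beta>)\<^sup>2 = 1"
    and s: "s = (\<Sum>k<K. norm2 n (\<lambda>i. \<alpha> * v k i + \<beta> * w k i))" "0 < s"
  defines "R \<equiv> \<lambda>i i'. complex_of_real ((cmod \<alpha>)\<^sup>2) * outer_sum K v i i'
                    + complex_of_real ((cmod \<beta>)\<^sup>2) * outer_sum K w i i'"
  shows "s * entropy n (outer_sum K (\<lambda>k i. (\<alpha> * v k i + \<beta> * w k i) / complex_of_real (sqrt s)))
           \<le> 2 * entropy n R"
    and "entropy n R \<le> (cmod \<alpha>)\<^sup>2 * entropy n (outer_sum K v) + (cmod \<beta>)\<^sup>2 * entropy n (outer_sum K w)
                        + h2 ((cmod \<alpha>)\<^sup>2)"
proof -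
  have \<beta>: "(cmod \<beta>)\<^sup>2 = 1 - (cmod \<alpha>)\<^sup>2" and "(cmod \<alpha>)\<^sup>2 \<le> 1"
    using ab zero_le_power2[of "cmod \<beta>"] by linarith+
  then show "entropy n R \<le> (cmod \<alpha>)\<^sup>2 * entropy n (outer_sum K v) + (cmod \<beta>)\<^sup>2 * entropy n (outer_sum K w)
                          + h2 ((cmod \<alpha>)\<^sup>2)"
    unfolding R_def \<beta> by (intro entropy_mixture_le[OF _ _ tr]) simp_all
  show "s * entropy n (outer_sum K (\<lambda>k i. (\<alpha> * v k i + \<beta> * w k i) / complex_of_real (sqrt s)))
          \<le> 2 * entropy n R"
    unfolding R_def by (rule entropy_superposition_le[OF tr ab s]) simp
qed

text \<open>Both one-sided bounds give the final estimate, since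
  min(x, y) = max(x, y) - |x - y|.\<close>
lemma two_sided_bound:
  fixes a x y X :: real
  assumes "a \<le> 2 * x" "a \<le> 2 * y" "x \<le> X" "y \<le> X"
  shows "a \<le> 2 * (X - \<bar>x - y\<bar>)"
  using assms by (auto simp: abs_if)

theorem theorem2:
  fixes dA dB :: nat and \<Psi> \<Phi> :: "complex vec" and \<alpha> \<beta> :: complex
  assumes "\<Psi> \<in> carrier_vec (dA * dB)" and "\<Phi> \<in> carrier_vec (dA * dB)"
    and "sqnorm \<Psi> = 1" and "sqnorm \<Phi> = 1"
    and "(cmod \<alpha>)\<^sup>2 + (cmod \<beta>)\<^sup>2 = 1"
    and "\<alpha> \<cdot>\<^sub>v \<Psi> + \<beta> \<cdot>\<^sub>v \<Phi> \<noteq> 0\<^sub>v (dA * dB)"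
  shows "let \<Gamma> = \<alpha> \<cdot>\<^sub>v \<Psi> + \<beta> \<cdot>\<^sub>v \<Phi>;
             \<rho>AB = complex_of_real ((cmod \<alpha>)\<^sup>2) \<cdot>\<^sub>m outer \<Psi>
                  + complex_of_real ((cmod \<beta>)\<^sup>2) \<cdot>\<^sub>m outer \<Phi>;
             \<rho>A = ptrace_B dA dB \<rho>AB;
             \<rho>B = ptrace_A dA dB \<rho>AB
         in sqnorm \<Gamma> * ent dA dB \<Gamma>
            \<le> 2 * ((cmod \<alpha>)\<^sup>2 * ent dA dB \<Psi> + (cmod \<beta>)\<^sup>2 * ent dA dB \<Phi>
                   + h2 ((cmod \<alpha>)\<^sup>2) - \<bar>vN_entropy \<rho>A - vN_entropy \<rho>B\<bar>)"
proof -
  define \<psi> where "\<psi> i j = \<Psi> $ (i * dB + j)" for i j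
  define \<phi> where "\<phi> i j = \<Phi> $ (i * dB + j)" for i j
  define \<Gamma> where "\<Gamma> = \<alpha> \<cdot>\<^sub>v \<Psi> + \<beta> \<cdot>\<^sub>v \<Phi>"
  define s where "s = sqnorm \<Gamma>"
  have \<Gamma>: "\<Gamma> \<in> carrier_vec (dA * dB)"
    using assms(1,2) unfolding \<Gamma>_def by simp
  have amp: "\<forall>i<dA. \<forall>j<dB. \<psi> i j = \<Psi> $ (i * dB + j)" "\<forall>i<dA. \<forall>j<dB. \<phi> i j = \<Phi> $ (i * dB + j)"
    "\<forall>i<dA. \<forall>j<dB. \<alpha> * \<psi> i j + \<beta> * \<phi> i j = \<Gamma> $ (i * dB + j)"
    using assms(1,2) index_lt_mult unfolding \<Gamma>_def \<psi>_def \<phi>_def by auto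
  have s: "0 < s"
    unfolding s_def \<Gamma>_def using assms(1,2,6) by (intro sqnorm_pos) auto
  note \<Psi>_norm = sqnorm_amplitudes[OF assms(1) amp(1), unfolded assms(3), symmetric]
   and \<Phi>_norm = sqnorm_amplitudes[OF assms(2) amp(2), unfolded assms(4), symmetric]
   and \<Gamma>_norm = sqnorm_amplitudes[OF \<Gamma> amp(3), folded s_def]
  note E\<Psi> = ent_amplitudes[OF assms(1,3) _ amp(1), simplified]
   and E\<Phi> = ent_amplitudes[OF assms(2,4) _ amp(2), simplified]
   and E\<Gamma> = ent_amplitudes[OF \<Gamma> s_def[symmetric] s amp(3)]
  note A = superposition_bounds[where v="\<lambda>j i. \<psi> i j" and w="\<lambda>j i. \<phi> i j", OF \<Psi>_norm(2) \<Phi>_norm(2) assms(5) \<Gamma>_norm(2) s]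
   and B = superposition_bounds[OF \<Psi>_norm(1) \<Phi>_norm(1) assms(5) \<Gamma>_norm(1) s]
  show ?thesis
    unfolding Let_def entropy_partial_traces[OF assms(1,2), folded \<psi>_def \<phi>_def] \<Gamma>_def[symmetric] s_def[symmetric]
    using two_sided_bound[OF A(1)[folded E\<Gamma>(1)] B(1)[folded E\<Gamma>(2)]
        A(2)[folded E\<Psi>(1) E\<Phi>(1)] B(2)[folded E\<Psi>(2) E\<Phi>(2)]] .
qed
end
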